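(* Let $n\ge2$, $G=\langle a_1,\ldots,a_n\mid a_1^2\cdots a_n^2\rangle$, $p=a_1^2\cdots a_n^2$, and let $P$ be the free resolution $0\to P_2\xrightarrow{d_2}P_1\xrightarrow{d_1}P_0\xrightarrow{\varepsilon}\mathbb{Z}\to0$ of $\mathbb{Z}$ over $\mathbb{Z}G$ with $P_0=\mathbb{Z}G\,x$, $P_1$ free on $y_1,\ldots,y_n$, $P_2=\mathbb{Z}G\,w$, $\varepsilon(x)=1$, $d_1(y_i)=(a_i-1)x$, $d_2(w)=\sum_{i=1}^n\frac{\partial p}{\partial a_i}y_i$. Then there is a diagonal approximation $\Delta\colon P\to P\otimes P$ such that $\Delta_0(x)=x\otimes x$, $\Delta_1(y_i)=y_i\otimes a_ix+x\otimes y_i$, $\Delta_{02}(w)=x\otimes w$, and \begin{align*} \Delta_{11}(w)=\sum_{i=1}^n\Bigl[&\Bigl(\sum_{j=1}^{i-1}(a_1^2\cdots a_{j-1}^2)(1+a_j)y_j\otimes(a_1^2\cdots a_{i-1}^2)y_i\Bigr)\\ &+\Bigl(\sum_{j=1}^{i-1}(a_1^2\cdots a_{j-1}^2)(1+a_j)y_j\otimes(a_1^2\cdots a_{i-1}^2)a_iy_i\Bigr)\\ &+(a_1^2\cdots a_{i-1}^2)y_i\otimes(a_1^2\cdots a_{i-1}^2)a_iy_i\Bigr]. \end{align*}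
   Context: Fox derivatives: $\partial g_j/\partial g_i=\delta_{ij}$, $\partial(uv)/\partial g_i=\partial u/\partial g_i+u\,\partial v/\partial g_i$, then passed to $\mathbb{Z}G$. $P\otimes P$ has $(P\otimes P)_m=\bigoplus_{r+s=m}P_r\otimes_{\mathbb{Z}}P_s$ with diagonal $G$-action, differential $\partial(u\otimes v)=du\otimes v+(-1)^ru\otimes dv$ ($u\in P_r$) and augmentation $\varepsilon\otimes\varepsilon$. A diagonal approximation is a $\mathbb{Z}G$-chain map $\Delta\colon P\to P\otimes P$ with $(\varepsilon\otimes\varepsilon)\Delta_0=\varepsilon$; $\Delta_{rs}$ is $\Delta_{r+s}$ followed by projection onto $P_r\otimes P_s$. Empty products equal $1$ and empty sums $0$. *)

theory Defs
  imports "HOL-Algebra.Group" "HOL-Library.Function_Algebras"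
begin

text \<open>Words in the free group on a_1..a_n: a letter (i,False) is a_i, (i,True) is a_i^{-1}.\<close>
type_synonym word = "(nat \<times> bool) list"
type_synonym elt = "word set"

definition letters_ok :: "nat \<Rightarrow> word \<Rightarrow> bool" where
  "letters_ok n w \<longleftrightarrow> (\<forall>l\<in>set w. 1 \<le> fst l \<and> fst l \<le> n)"

definition relator :: "nat \<Rightarrow> word" where
  "relator n = concat (map (\<lambda>i. [(i, False), (i, False)]) [1..<Suc n])"

definition elem_step :: "nat \<Rightarrow> word \<Rightarrow> word \<Rightarrow> bool" where
  "elem_step n u v \<longleftrightarrow> letters_ok n u \<and> letters_ok n v \<and>
     ((\<exists>x y i b. u = x @ [(i, b), (i, \<not> b)] @ y \<and> v = x @ y) \<or>
      (\<exists>x y. u = x @ relator n @ y \<and> v = x @ y))"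

definition word_equiv :: "nat \<Rightarrow> word \<Rightarrow> word \<Rightarrow> bool" where
  "word_equiv n = (sup (elem_step n) (elem_step n)\<inverse>\<inverse>)\<^sup>*\<^sup>*"

definition wclass :: "nat \<Rightarrow> word \<Rightarrow> elt" where
  "wclass n w = {v. letters_ok n v \<and> word_equiv n w v}"

definition surface_group :: "nat \<Rightarrow> elt monoid" where
  "surface_group n =
     \<lparr>carrier = wclass n ` {w. letters_ok n w},
      mult = (\<lambda>X Y. wclass n ((SOME u. u \<in> X) @ (SOME v. v \<in> Y))),
      one = wclass n []\<rparr>"

definition gen :: "nat \<Rightarrow> nat \<Rightarrow> elt" where
  "gen n i = wclass n [(i, False)]"

definition letter_elt :: "nat \<Rightarrow> nat \<times> bool \<Rightarrow> elt" where
  "letter_elt n l = wclass n [l]"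

definition sqprod :: "nat \<Rightarrow> nat \<Rightarrow> elt" where
  "sqprod n i = foldr (\<lambda>j acc. mult (surface_group n)
       (mult (surface_group n) (gen n j) (gen n j)) acc) [1..<i] (one (surface_group n))"

text \<open>Elements of ZG are finitely supported functions elt => int.\<close>
definition grelt :: "elt \<Rightarrow> elt \<Rightarrow> int" where
  "grelt g = (\<lambda>h. if h = g then 1 else 0)"

definition gr_shift :: "nat \<Rightarrow> elt \<Rightarrow> (elt \<Rightarrow> int) \<Rightarrow> elt \<Rightarrow> int" where
  "gr_shift n g r = (\<lambda>h. if h \<in> carrier (surface_group n)
       then r (mult (surface_group n) (m_inv (surface_group n) g) h) else 0)"

fun fox :: "nat \<Rightarrow> nat \<Rightarrow> word \<Rightarrow> elt \<Rightarrow> int" where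
  "fox n i [] = (\<lambda>_. 0)"
| "fox n i (l # w) = (\<lambda>h.
      (if fst l = i then (if snd l then - grelt (letter_elt n l) h
                          else grelt (one (surface_group n)) h) else 0)
      + gr_shift n (letter_elt n l) (fox n i w) h)"

text \<open>An element of P (all degrees together) is a finitely supported integer function on
  triples (k, g, b): degree k, group element g, basis index b.  Basis of P_0: {0} (x),
  of P_1: {1..n} (y_i), of P_2: {0} (w).  The free Z-module on G x basis is the free
  ZG-module on the basis.\<close>
type_synonym chain = "nat \<times> elt \<times> nat \<Rightarrow> int"
type_synonym tchain = "(nat \<times> elt \<times> nat) \<times> (nat \<times> elt \<times> nat) \<Rightarrow> int"

definition basis_set :: "nat \<Rightarrow> nat \<Rightarrow> nat set" where
  "basis_set n k = (if k = 0 \<or> k = 2 then {0} else if k = 1 then {1..n} else {})"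

definition valid :: "nat \<Rightarrow> nat \<times> elt \<times> nat \<Rightarrow> bool" where
  "valid n t \<longleftrightarrow> fst (snd t) \<in> carrier (surface_group n) \<and> snd (snd t) \<in> basis_set n (fst t)"

definition in_P :: "nat \<Rightarrow> nat \<Rightarrow> chain \<Rightarrow> bool" where
  "in_P n k f \<longleftrightarrow> finite {t. f t \<noteq> 0} \<and> (\<forall>t. f t \<noteq> 0 \<longrightarrow> fst t = k \<and> valid n t)"

definition gelt :: "elt \<Rightarrow> nat \<Rightarrow> nat \<Rightarrow> chain" where
  "gelt g k b = (\<lambda>t. if t = (k, g, b) then 1 else 0)"

definition ind :: "nat \<times> elt \<times> nat \<Rightarrow> chain" where
  "ind s = (\<lambda>t. if t = s then 1 else 0)"

definition act :: "nat \<Rightarrow> elt \<Rightarrow> chain \<Rightarrow> chain" where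
  "act n g f = (\<lambda>(k, h, b). if h \<in> carrier (surface_group n)
       then f (k, mult (surface_group n) (m_inv (surface_group n) g) h, b) else 0)"

definition smul :: "nat \<Rightarrow> (elt \<Rightarrow> int) \<Rightarrow> chain \<Rightarrow> chain" where
  "smul n r f = (\<Sum>g\<in>{g \<in> carrier (surface_group n). r g \<noteq> 0}. (\<lambda>t. r g * act n g f t))"

definition xgen :: "nat \<Rightarrow> chain" where "xgen n = gelt (one (surface_group n)) 0 0"
definition ygen :: "nat \<Rightarrow> nat \<Rightarrow> chain" where "ygen n i = gelt (one (surface_group n)) 1 i"
definition wgen :: "nat \<Rightarrow> chain" where "wgen n = gelt (one (surface_group n)) 2 0"

definition d_gen :: "nat \<Rightarrow> nat \<times> elt \<times> nat \<Rightarrow> chain" where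
  "d_gen n t = (case t of (k, g, b) \<Rightarrow>
     if k = 1 then act n g (gelt (gen n b) 0 0 - xgen n)
     else if k = 2 then act n g (\<Sum>i\<in>{1..n}. smul n (fox n i (relator n)) (ygen n i))
     else (\<lambda>_. 0))"

definition dP :: "nat \<Rightarrow> chain \<Rightarrow> chain" where
  "dP n f = (\<lambda>s. \<Sum>t\<in>{t. f t \<noteq> 0}. f t * d_gen n t s)"

definition epsP :: "chain \<Rightarrow> int" where
  "epsP f = (\<Sum>t\<in>{t. f t \<noteq> 0}. f t)"

text \<open>P_r (x)_Z P_s is realised as the free abelian group on (G x B_r) x (G x B_s);
  u (x) v is the product function.\<close>
definition tensor :: "chain \<Rightarrow> chain \<Rightarrow> tchain" where
  "tensor u v = (\<lambda>(p, q). u p * v q)"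

definition in_T :: "nat \<Rightarrow> nat \<Rightarrow> tchain \<Rightarrow> bool" where
  "in_T n m F \<longleftrightarrow> finite {z. F z \<noteq> 0} \<and>
     (\<forall>z. F z \<noteq> 0 \<longrightarrow> fst (fst z) + fst (snd z) = m \<and> valid n (fst z) \<and> valid n (snd z))"

definition tact :: "nat \<Rightarrow> elt \<Rightarrow> tchain \<Rightarrow> tchain" where
  "tact n g F = (\<lambda>((k, h, b), (k', h', b')).
     if h \<in> carrier (surface_group n) \<and> h' \<in> carrier (surface_group n)
     then F ((k, mult (surface_group n) (m_inv (surface_group n) g) h, b),
             (k', mult (surface_group n) (m_inv (surface_group n) g) h', b'))
     else 0)"

definition tdiff :: "nat \<Rightarrow> tchain \<Rightarrow> tchain" where
  "tdiff n F = (\<lambda>z. \<Sum>pq\<in>{z. F z \<noteq> 0}. F pq *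
      (tensor (d_gen n (fst pq)) (ind (snd pq)) z
       + (-1) ^ fst (fst pq) * tensor (ind (fst pq)) (d_gen n (snd pq)) z))"

definition teps :: "tchain \<Rightarrow> int" where
  "teps F = (\<Sum>pq\<in>{z. F z \<noteq> 0}. F pq * (if fst (fst pq) = 0 \<and> fst (snd pq) = 0 then 1 else 0))"

definition proj :: "nat \<Rightarrow> tchain \<Rightarrow> tchain" where
  "proj r F = (\<lambda>z. if fst (fst z) = r then F z else 0)"

definition is_diagonal_approx :: "nat \<Rightarrow> (nat \<Rightarrow> chain \<Rightarrow> tchain) \<Rightarrow> bool" where
  "is_diagonal_approx n \<Delta> \<longleftrightarrow>
     (\<forall>k f. in_P n k f \<longrightarrow> in_T n k (\<Delta> k f)) \<and>
     (\<forall>k f f'. in_P n k f \<longrightarrow> in_P n k f' \<longrightarrow> \<Delta> k (f + f') = \<Delta> k f + \<Delta> k f') \<and>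
     (\<forall>k g f. g \<in> carrier (surface_group n) \<longrightarrow> in_P n k f \<longrightarrow>
         \<Delta> k (act n g f) = tact n g (\<Delta> k f)) \<and>
     (\<forall>k f. in_P n (Suc k) f \<longrightarrow> tdiff n (\<Delta> (Suc k) f) = \<Delta> k (dP n f)) \<and>
     (\<forall>f. in_P n 0 f \<longrightarrow> teps (\<Delta> 0 f) = epsP f)"

end

theory Submission
  imports Defs
begin

text \<open>
  The diagonal is prescribed on the free \<open>\<int>G\<close>-basis and extended linearly, so that
  equivariance and additivity are automatic and the chain map identity need only be checked on
  the basis elements \<open>x\<close>, \<open>y\<^sub>i\<close>, \<open>w\<close>.  For \<open>w\<close>, put
  \<open>s\<^sub>i = a\<^sub>1\<^sup>2\<cdots>a\<^sub>i\<^sub>-\<^sub>1\<^sup>2\<close>.  The Fox derivative of the relator is \<open>\<partial>p/\<partial>a\<^sub>i = s\<^sub>i + s\<^sub>i a\<^sub>i\<close>, so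
  \<open>d w = \<Sum>\<^sub>i (Y\<^sub>i + Y'\<^sub>i)\<close> with \<open>Y\<^sub>i = s\<^sub>i y\<^sub>i\<close>, \<open>Y'\<^sub>i = s\<^sub>i a\<^sub>i y\<^sub>i\<close>, and
  \<open>d Y\<^sub>i = Z\<^sub>i - X\<^sub>i\<close>, \<open>d Y'\<^sub>i = X\<^sub>i\<^sub>+\<^sub>1 - Z\<^sub>i\<close> where \<open>X\<^sub>i = s\<^sub>i x\<close>, \<open>Z\<^sub>i = s\<^sub>i a\<^sub>i x\<close>.
  The relation of \<open>G\<close> says exactly \<open>X\<^sub>n\<^sub>+\<^sub>1 = X\<^sub>1 = x\<close>.  Taking
  \<open>\<Delta> w = x \<otimes> w + \<Delta>\<^sub>1\<^sub>1 w + w \<otimes> x\<close>, the identity \<open>\<partial>(\<Delta> w) = \<Delta>(d w)\<close> becomes a telescoping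
  identity valid for any biadditive pairing in place of \<open>\<otimes>\<close>.
\<close>

abbreviation SG :: "nat \<Rightarrow> elt monoid" where "SG n \<equiv> surface_group n"

subsection \<open>The presented group\<close>

lemma letters_ok_append [simp]: "letters_ok n (u @ v) \<longleftrightarrow> letters_ok n u \<and> letters_ok n v"
  by (auto simp: letters_ok_def)

lemma letters_ok_Cons [simp]: "letters_ok n (l # v) \<longleftrightarrow> 1 \<le> fst l \<and> fst l \<le> n \<and> letters_ok n v"
  by (auto simp: letters_ok_def)

lemma letters_ok_Nil [simp]: "letters_ok n []"
  by (auto simp: letters_ok_def)

lemma word_equiv_refl: "word_equiv n u u"
  by (simp add: word_equiv_def)

lemma word_equiv_sym: "word_equiv n u v \<Longrightarrow> word_equiv n v u"
  unfolding word_equiv_def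
proof (induction rule: rtranclp_induct)
  case (step v w)
  then have "(sup (elem_step n) (elem_step n)\<inverse>\<inverse>) w v" by auto
  with step.IH show ?case by (meson converse_rtranclp_into_rtranclp)
qed simp

lemma word_equiv_trans: "word_equiv n u v \<Longrightarrow> word_equiv n v w \<Longrightarrow> word_equiv n u w"
  unfolding word_equiv_def by (rule rtranclp_trans)

lemma elem_step_in_context:
  assumes "elem_step n u v" "letters_ok n x" "letters_ok n y"
  shows "elem_step n (x @ u @ y) (x @ v @ y)"
proof -
  from assms(1) have ok: "letters_ok n (x @ u @ y)" "letters_ok n (x @ v @ y)"
    using assms(2,3) by (auto simp: elem_step_def)
  from assms(1) consider (cancel) x0 y0 i b where "u = x0 @ [(i, b), (i, \<not> b)] @ y0" "v = x0 @ y0"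
    | (relator) x0 y0 where "u = x0 @ relator n @ y0" "v = x0 @ y0"
    unfolding elem_step_def by blast
  then show ?thesis
  proof cases
    case cancel
    then have "x @ u @ y = (x @ x0) @ [(i, b), (i, \<not> b)] @ (y0 @ y)" "x @ v @ y = (x @ x0) @ (y0 @ y)"
      by auto
    with ok show ?thesis unfolding elem_step_def by blast
  next
    case relator
    then have "x @ u @ y = (x @ x0) @ relator n @ (y0 @ y)" "x @ v @ y = (x @ x0) @ (y0 @ y)"
      by auto
    with ok show ?thesis unfolding elem_step_def by blast
  qed
qed

lemma word_equiv_in_context:
  assumes "word_equiv n u v" "letters_ok n x" "letters_ok n y"
  shows "word_equiv n (x @ u @ y) (x @ v @ y)"
  using assms(1) unfolding word_equiv_def
proof (induction rule: rtranclp_induct)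
  case (step v w)
  then have "(sup (elem_step n) (elem_step n)\<inverse>\<inverse>) (x @ v @ y) (x @ w @ y)"
    using elem_step_in_context[OF _ assms(2,3)] by auto
  with step.IH show ?case by (meson rtranclp.rtrancl_into_rtrancl)
qed simp

lemma wclass_eqI: "letters_ok n u \<Longrightarrow> word_equiv n u v \<Longrightarrow> wclass n u = wclass n v"
  unfolding wclass_def by (auto intro: word_equiv_trans word_equiv_sym)

lemma some_in_wclass:
  assumes "letters_ok n u"
  shows "letters_ok n (SOME r. r \<in> wclass n u) \<and> word_equiv n u (SOME r. r \<in> wclass n u)"
proof -
  have "u \<in> wclass n u" using assms by (simp add: wclass_def word_equiv_refl)
  then have "(SOME r. r \<in> wclass n u) \<in> wclass n u" by (rule someI)
  then show ?thesis by (simp add: wclass_def)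
qed

lemma mult_wclass:
  assumes "letters_ok n u" "letters_ok n v"
  shows "wclass n u \<otimes>\<^bsub>SG n\<^esub> wclass n v = wclass n (u @ v)"
proof -
  define u' where "u' = (SOME r. r \<in> wclass n u)"
  define v' where "v' = (SOME r. r \<in> wclass n v)"
  have u': "letters_ok n u'" "word_equiv n u u'" using some_in_wclass[OF assms(1)] u'_def by auto
  have v': "letters_ok n v'" "word_equiv n v v'" using some_in_wclass[OF assms(2)] v'_def by auto
  have "word_equiv n ([] @ u @ v) ([] @ u' @ v)"
    by (rule word_equiv_in_context) (use u' assms in auto)
  moreover have "word_equiv n (u' @ v @ []) (u' @ v' @ [])"
    by (rule word_equiv_in_context) (use u' v' in auto)
  ultimately have "word_equiv n (u @ v) (u' @ v')" by (auto intro: word_equiv_trans)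
  then show ?thesis
    using assms by (simp add: surface_group_def u'_def[symmetric] v'_def[symmetric] wclass_eqI)
qed

definition inv_word :: "word \<Rightarrow> word" where
  "inv_word w = rev (map (\<lambda>(i, b). (i, \<not> b)) w)"

lemma letters_ok_inv_word: "letters_ok n w \<Longrightarrow> letters_ok n (inv_word w)"
  by (auto simp: letters_ok_def inv_word_def)

lemma word_equiv_inv_word_append: "letters_ok n w \<Longrightarrow> word_equiv n (inv_word w @ w) []"
proof (induction w)
  case (Cons l w)
  obtain i b where l: "l = (i, b)" by (cases l)
  let ?u = "inv_word w @ [(i, \<not> b), (i, \<not> \<not> b)] @ w"
  have "letters_ok n ?u" "letters_ok n (inv_word w @ w)"
    using Cons.prems letters_ok_inv_word[of n w] l by auto
  then have "elem_step n ?u (inv_word w @ w)" unfolding elem_step_def by blast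
  then have "word_equiv n (inv_word (l # w) @ l # w) (inv_word w @ w)"
    unfolding word_equiv_def by (intro r_into_rtranclp) (simp add: l inv_word_def)
  with Cons show ?case by (auto intro: word_equiv_trans)
qed (simp add: inv_word_def word_equiv_refl)

lemma surface_group_carrier: "carrier (SG n) = wclass n ` {w. letters_ok n w}"
  by (simp add: surface_group_def)

lemma surface_group_one: "\<one>\<^bsub>SG n\<^esub> = wclass n []"
  by (simp add: surface_group_def)

lemma group_surface_group: "group (SG n)"
proof (rule groupI)
  fix x assume "x \<in> carrier (SG n)"
  then obtain w where w: "letters_ok n w" "x = wclass n w" by (auto simp: surface_group_carrier)
  show "\<exists>y\<in>carrier (SG n). y \<otimes>\<^bsub>SG n\<^esub> x = \<one>\<^bsub>SG n\<^esub>"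
    using w letters_ok_inv_word[OF w(1)] word_equiv_inv_word_append[OF w(1)]
    by (auto simp: surface_group_carrier surface_group_one mult_wclass
        intro!: bexI[of _ "wclass n (inv_word w)"] wclass_eqI)
qed (auto simp: surface_group_carrier surface_group_one mult_wclass)

interpretation sg: group "SG n" for n
  by (rule group_surface_group)

lemma wclass_in_carrier: "letters_ok n w \<Longrightarrow> wclass n w \<in> carrier (SG n)"
  by (auto simp: surface_group_carrier)

lemma gen_in_carrier: "1 \<le> i \<Longrightarrow> i \<le> n \<Longrightarrow> gen n i \<in> carrier (SG n)"
  unfolding gen_def by (rule wclass_in_carrier) simp

lemma letter_elt_in_carrier: "1 \<le> fst l \<Longrightarrow> fst l \<le> n \<Longrightarrow> letter_elt n l \<in> carrier (SG n)"
  unfolding letter_elt_def by (rule wclass_in_carrier) simp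

definition squares :: "nat \<Rightarrow> word" where
  "squares i = concat (map (\<lambda>j. [(j, False), (j, False)]) [1..<i])"

lemma letters_ok_squares: "i \<le> Suc n \<Longrightarrow> letters_ok n (squares i)"
  by (auto simp: squares_def letters_ok_def)

lemma relator_eq_squares: "relator n = squares (Suc n)"
  by (simp add: relator_def squares_def)

lemma foldr_square_gens:
  assumes "\<forall>j\<in>set js. 1 \<le> j \<and> j \<le> n"
  shows "foldr (\<lambda>j acc. gen n j \<otimes>\<^bsub>SG n\<^esub> gen n j \<otimes>\<^bsub>SG n\<^esub> acc) js \<one>\<^bsub>SG n\<^esub>
         = wclass n (concat (map (\<lambda>j. [(j, False), (j, False)]) js))"
  using assms
proof (induction js)
  case (Cons j js)
  then have "letters_ok n (concat (map (\<lambda>j. [(j, False), (j, False)]) js))"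
    by (auto simp: letters_ok_def)
  with Cons show ?case by (simp add: gen_def mult_wclass)
qed (simp add: surface_group_one)

lemma sqprod_eq_wclass: "i \<le> Suc n \<Longrightarrow> sqprod n i = wclass n (squares i)"
  unfolding sqprod_def squares_def by (rule foldr_square_gens) auto

lemma sqprod_in_carrier: "i \<le> Suc n \<Longrightarrow> sqprod n i \<in> carrier (SG n)"
  by (simp add: sqprod_eq_wclass letters_ok_squares wclass_in_carrier)

lemma sqprod_1: "sqprod n 1 = \<one>\<^bsub>SG n\<^esub>"
  by (simp add: sqprod_def)

lemma sqprod_Suc:
  assumes "1 \<le> i" "i \<le> n"
  shows "sqprod n (Suc i) = sqprod n i \<otimes>\<^bsub>SG n\<^esub> gen n i \<otimes>\<^bsub>SG n\<^esub> gen n i"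
proof -
  have "squares (Suc i) = squares i @ [(i, False)] @ [(i, False)]"
    using assms by (simp add: squares_def)
  then show ?thesis
    using assms letters_ok_squares[of i n] by (simp add: sqprod_eq_wclass gen_def mult_wclass)
qed

text \<open>This is the only place where the defining relation of \<open>G\<close> enters.\<close>

lemma sqprod_Suc_n: "sqprod n (Suc n) = \<one>\<^bsub>SG n\<^esub>"
proof -
  have "elem_step n (relator n) []"
    using letters_ok_squares[of "Suc n" n] by (auto simp: elem_step_def relator_eq_squares)
  then have "word_equiv n (relator n) []" by (auto simp: word_equiv_def)
  then show ?thesis
    using letters_ok_squares[of "Suc n" n]
    by (simp add: sqprod_eq_wclass surface_group_one relator_eq_squares wclass_eqI)
qed

subsection \<open>Fox derivatives of the relator\<close>

lemma gr_shift_add: "gr_shift n g (r + s) = gr_shift n g r + gr_shift n g s"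
  by (auto simp: gr_shift_def)

lemma gr_shift_zero: "gr_shift n g (\<lambda>_. 0) = (\<lambda>_. 0)"
  by (auto simp: gr_shift_def)

lemma gr_shift_gr_shift:
  "g \<in> carrier (SG n) \<Longrightarrow> h \<in> carrier (SG n) \<Longrightarrow>
   gr_shift n g (gr_shift n h r) = gr_shift n (g \<otimes>\<^bsub>SG n\<^esub> h) r"
  by (auto simp: gr_shift_def sg.inv_mult_group sg.m_assoc)

lemma gr_shift_one:
  "(\<And>h. r h \<noteq> 0 \<Longrightarrow> h \<in> carrier (SG n)) \<Longrightarrow> gr_shift n \<one>\<^bsub>SG n\<^esub> r = r"
  by (auto simp: gr_shift_def fun_eq_iff)

lemma gr_shift_grelt:
  assumes "g \<in> carrier (SG n)" "h \<in> carrier (SG n)"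
  shows "gr_shift n g (grelt h) = grelt (g \<otimes>\<^bsub>SG n\<^esub> h)"
proof -
  have "x \<in> carrier (SG n) \<Longrightarrow> inv\<^bsub>SG n\<^esub> g \<otimes>\<^bsub>SG n\<^esub> x = h \<longleftrightarrow> x = g \<otimes>\<^bsub>SG n\<^esub> h" for x
    using assms by (metis sg.inv_closed sg.inv_solve_left)
  then show ?thesis using assms by (auto simp: gr_shift_def grelt_def)
qed

lemma fox_in_carrier: "letters_ok n w \<Longrightarrow> fox n i w h \<noteq> 0 \<Longrightarrow> h \<in> carrier (SG n)"
  by (induction w arbitrary: h)
    (auto simp: grelt_def gr_shift_def letter_elt_in_carrier split: if_splits)

lemma fox_append:
  assumes "letters_ok n u" "letters_ok n v"
  shows "fox n i (u @ v) = fox n i u + gr_shift n (wclass n u) (fox n i v)"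
  using assms(1)
proof (induction u)
  case Nil
  then show ?case
    using gr_shift_one[of "fox n i v" n] fox_in_carrier[OF assms(2)]
    by (simp add: surface_group_one fun_eq_iff)
next
  case (Cons l u)
  have carrier: "letter_elt n l \<in> carrier (SG n)" "wclass n u \<in> carrier (SG n)"
    using Cons.prems by (auto intro: letter_elt_in_carrier wclass_in_carrier)
  have mult: "letter_elt n l \<otimes>\<^bsub>SG n\<^esub> wclass n u = wclass n (l # u)"
    using Cons.prems mult_wclass[of n "[l]" u] by (simp add: letter_elt_def)
  have "fox n i ((l # u) @ v) = (\<lambda>h.
      (if fst l = i then (if snd l then - grelt (letter_elt n l) h else grelt \<one>\<^bsub>SG n\<^esub> h) else 0)
      + gr_shift n (letter_elt n l) (fox n i u + gr_shift n (wclass n u) (fox n i v)) h)"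
    using Cons by (simp only: append_Cons fox.simps(2) letters_ok_Cons)
  also have "\<dots> = fox n i (l # u) + gr_shift n (wclass n (l # u)) (fox n i v)"
    by (simp add: gr_shift_add gr_shift_gr_shift[OF carrier] mult fun_eq_iff)
  finally show ?case .
qed

lemma fox_square_letter:
  assumes "1 \<le> j" "j \<le> n"
  shows "fox n i [(j, False), (j, False)] =
    (if j = i then grelt \<one>\<^bsub>SG n\<^esub> + grelt (gen n j) else (\<lambda>_. 0))"
proof -
  have letter: "letter_elt n (j, False) = gen n j" by (simp add: letter_elt_def gen_def)
  have single: "fox n i [(j, False)] = (if j = i then grelt \<one>\<^bsub>SG n\<^esub> else (\<lambda>_. 0))"
    by (auto simp: fun_eq_iff letter gr_shift_zero)
  have "fox n i [(j, False), (j, False)] = (if j = i then grelt \<one>\<^bsub>SG n\<^esub> else (\<lambda>_. 0))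
      + gr_shift n (gen n j) (fox n i [(j, False)])"
    by (simp only: fox.simps letter) (auto simp: fun_eq_iff)
  then show ?thesis
    unfolding single using gen_in_carrier[OF assms]
    by (auto simp: gr_shift_zero gr_shift_grelt fun_eq_iff)
qed

lemma fox_squares:
  assumes "1 \<le> i" "i \<le> n" "k \<le> Suc n"
  shows "fox n i (squares k) =
    (if i < k then grelt (sqprod n i) + grelt (sqprod n i \<otimes>\<^bsub>SG n\<^esub> gen n i) else (\<lambda>_. 0))"
  using assms(3)
proof (induction k)
  case (Suc k)
  show ?case
  proof (cases "k = 0")
    case False
    have split: "squares (Suc k) = squares k @ [(k, False), (k, False)]"
      using False by (simp add: squares_def)
    have ok: "letters_ok n (squares k)" "letters_ok n [(k, False), (k, False)]"
      using Suc.prems False letters_ok_squares by auto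
    have carrier: "sqprod n k \<in> carrier (SG n)" "gen n k \<in> carrier (SG n)"
      using Suc.prems False by (auto intro: sqprod_in_carrier gen_in_carrier)
    have pair: "fox n i [(k, False), (k, False)] =
        (if k = i then grelt \<one>\<^bsub>SG n\<^esub> + grelt (gen n k) else (\<lambda>_. 0))"
      using False Suc.prems by (intro fox_square_letter) auto
    have "wclass n (squares k) = sqprod n k" using Suc.prems by (simp add: sqprod_eq_wclass)
    then show ?thesis
      unfolding split fox_append[OF ok] Suc.IH[OF Suc_leD[OF Suc.prems]] pair
      using carrier
      by (auto simp: gr_shift_add gr_shift_grelt gr_shift_zero fun_eq_iff less_Suc_eq)
  qed (use assms in \<open>simp add: squares_def\<close>)
qed (simp add: squares_def)

lemma fox_relator:
  "1 \<le> i \<Longrightarrow> i \<le> n \<Longrightarrow>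
   fox n i (relator n) = grelt (sqprod n i) + grelt (sqprod n i \<otimes>\<^bsub>SG n\<^esub> gen n i)"
  using fox_squares[of i n "Suc n"] by (simp add: relator_eq_squares)

subsection \<open>Finitely supported integer-valued functions\<close>

text \<open>
  All modules in sight are free abelian groups of finitely supported functions on a basis;
  \<open>lin_ext D\<close> extends \<open>D\<close> linearly from the basis vectors \<open>unit_fun t\<close>.
\<close>

definition unit_fun :: "'a \<Rightarrow> 'a \<Rightarrow> int" where
  "unit_fun a = (\<lambda>t. if t = a then 1 else 0)"

definition lin_ext :: "('a \<Rightarrow> 'b \<Rightarrow> int) \<Rightarrow> ('a \<Rightarrow> int) \<Rightarrow> 'b \<Rightarrow> int" where
  "lin_ext D F = (\<lambda>z. \<Sum>t\<in>{t. F t \<noteq> 0}. F t * D t z)"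

abbreviation fin_supp :: "('a \<Rightarrow> int) \<Rightarrow> bool" where
  "fin_supp F \<equiv> finite {t. F t \<noteq> 0}"

definition supp_on :: "('a \<Rightarrow> bool) \<Rightarrow> ('a \<Rightarrow> int) \<Rightarrow> bool" where
  "supp_on P F \<longleftrightarrow> (\<forall>z. F z \<noteq> 0 \<longrightarrow> P z)"

lemma fin_supp_unit_fun: "fin_supp (unit_fun a)"
  by (simp add: unit_fun_def)

lemma fin_supp_add: "fin_supp F \<Longrightarrow> fin_supp G \<Longrightarrow> fin_supp (F + G)"
  by (rule finite_subset[of _ "{t. F t \<noteq> 0} \<union> {t. G t \<noteq> 0}"]) auto

lemma fin_supp_diff: "fin_supp F \<Longrightarrow> fin_supp G \<Longrightarrow> fin_supp (F - G)"
  by (rule finite_subset[of _ "{t. F t \<noteq> 0} \<union> {t. G t \<noteq> 0}"]) auto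

lemma fin_supp_sum: "(\<And>i. i \<in> I \<Longrightarrow> fin_supp (F i)) \<Longrightarrow> fin_supp (\<Sum>i\<in>I. F i)"
proof (induction I rule: infinite_finite_induct)
  case (insert x I)
  then have "fin_supp (F x + sum F I)" by (intro fin_supp_add) auto
  with insert show ?case by simp
qed auto

lemma supp_on_unit_fun: "P a \<Longrightarrow> supp_on P (unit_fun a)"
  by (simp add: supp_on_def unit_fun_def)

lemma supp_on_add: "supp_on P F \<Longrightarrow> supp_on P G \<Longrightarrow> supp_on P (F + G)"
  unfolding supp_on_def by (metis add.right_neutral plus_fun_apply)

lemma supp_on_sum: "(\<And>i. i \<in> I \<Longrightarrow> supp_on P (F i)) \<Longrightarrow> supp_on P (\<Sum>i\<in>I. F i)"
proof (induction I rule: infinite_finite_induct)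
  case (insert x I)
  then have "supp_on P (F x + sum F I)" by (intro supp_on_add) auto
  then show ?case by (simp only: sum.insert[OF insert(1,2)])
qed (auto simp: supp_on_def)

lemma lin_ext_superset:
  "finite S \<Longrightarrow> {t. F t \<noteq> 0} \<subseteq> S \<Longrightarrow> lin_ext D F z = (\<Sum>t\<in>S. F t * D t z)"
  unfolding lin_ext_def by (rule sum.mono_neutral_left) auto

lemma lin_ext_nonzero: "lin_ext D F z \<noteq> 0 \<Longrightarrow> \<exists>t. F t \<noteq> 0 \<and> D t z \<noteq> 0"
proof -
  assume "lin_ext D F z \<noteq> 0"
  then obtain t where "t \<in> {t. F t \<noteq> 0}" "F t * D t z \<noteq> 0"
    unfolding lin_ext_def by (rule sum.not_neutral_contains_not_neutral)
  then show ?thesis by auto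
qed

lemma lin_ext_unit_fun: "lin_ext D (unit_fun a) = D a"
  using lin_ext_superset[of "{a}" "unit_fun a" D] by (auto simp: unit_fun_def)

lemma lin_ext_add:
  assumes "fin_supp F" "fin_supp G"
  shows "lin_ext D (F + G) = lin_ext D F + lin_ext D G"
proof
  fix z
  let ?S = "{t. F t \<noteq> 0} \<union> {t. G t \<noteq> 0}"
  have "finite ?S" using assms by simp
  then have "lin_ext D (F + G) z = (\<Sum>t\<in>?S. (F + G) t * D t z)"
    by (rule lin_ext_superset) auto
  also have "\<dots> = (\<Sum>t\<in>?S. F t * D t z) + (\<Sum>t\<in>?S. G t * D t z)"
    by (simp add: distrib_right sum.distrib)
  also have "\<dots> = lin_ext D F z + lin_ext D G z"
    using lin_ext_superset[of ?S F D z] lin_ext_superset[of ?S G D z] \<open>finite ?S\<close> by auto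
  finally show "lin_ext D (F + G) z = (lin_ext D F + lin_ext D G) z" by simp
qed

lemma lin_ext_diff:
  assumes "fin_supp F" "fin_supp G"
  shows "lin_ext D (F - G) = lin_ext D F - lin_ext D G"
proof -
  have neg: "lin_ext D (- G) = - lin_ext D G"
    by (simp add: lin_ext_def fun_eq_iff sum_negf)
  have "fin_supp (- G)" using assms(2) by simp
  from lin_ext_add[OF assms(1) this, of D] show ?thesis
    by (simp only: diff_conv_add_uminus neg)
qed

lemma lin_ext_sum:
  "finite I \<Longrightarrow> (\<And>i. i \<in> I \<Longrightarrow> fin_supp (F i)) \<Longrightarrow>
   lin_ext D (\<Sum>i\<in>I. F i) = (\<Sum>i\<in>I. lin_ext D (F i))"
proof (induction I rule: finite_induct)
  case empty
  then show ?case by (simp add: lin_ext_def zero_fun_def)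
next
  case (insert x I)
  have IH: "lin_ext D (sum F I) = (\<Sum>i\<in>I. lin_ext D (F i))"
    by (rule insert.IH) (use insert.prems in auto)
  have "lin_ext D (F x + sum F I) = lin_ext D (F x) + lin_ext D (sum F I)"
    using insert.prems by (intro lin_ext_add fin_supp_sum) auto
  then show ?case by (simp only: sum.insert[OF insert(1,2)] IH)
qed

lemma lin_ext_cong: "(\<And>t. F t \<noteq> 0 \<Longrightarrow> D t = D' t) \<Longrightarrow> lin_ext D F = lin_ext D' F"
  unfolding lin_ext_def by (rule ext, rule sum.cong) auto

lemma fin_supp_lin_ext:
  assumes "fin_supp F" "\<And>t. F t \<noteq> 0 \<Longrightarrow> fin_supp (D t)"
  shows "fin_supp (lin_ext D F)"
proof (rule finite_subset)
  show "{z. lin_ext D F z \<noteq> 0} \<subseteq> (\<Union>t\<in>{t. F t \<noteq> 0}. {z. D t z \<noteq> 0})"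
  proof
    fix z assume "z \<in> {z. lin_ext D F z \<noteq> 0}"
    with lin_ext_nonzero[of D F z] obtain t where "F t \<noteq> 0" "D t z \<noteq> 0" by auto
    then show "z \<in> (\<Union>t\<in>{t. F t \<noteq> 0}. {z. D t z \<noteq> 0})" by auto
  qed
qed (use assms in auto)

lemma supp_on_lin_ext: "(\<And>t. F t \<noteq> 0 \<Longrightarrow> supp_on P (D t)) \<Longrightarrow> supp_on P (lin_ext D F)"
  unfolding supp_on_def by (metis lin_ext_nonzero)

lemma lin_ext_lin_ext:
  assumes "fin_supp F" "\<And>t. F t \<noteq> 0 \<Longrightarrow> fin_supp (E t)"
  shows "lin_ext D (lin_ext E F) = lin_ext (\<lambda>t. lin_ext D (E t)) F"
proof
  fix z
  let ?S = "{t. F t \<noteq> 0}"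
  let ?U = "\<Union>t\<in>?S. {u. E t u \<noteq> 0}"
  have U: "finite ?U" using assms by auto
  have "lin_ext D (lin_ext E F) z = (\<Sum>u\<in>?U. lin_ext E F u * D u z)"
  proof (rule lin_ext_superset[OF U], rule subsetI)
    fix u assume "u \<in> {u. lin_ext E F u \<noteq> 0}"
    with lin_ext_nonzero[of E F u] show "u \<in> ?U" by auto
  qed
  also have "\<dots> = (\<Sum>u\<in>?U. \<Sum>t\<in>?S. F t * E t u * D u z)"
    by (simp add: lin_ext_def sum_distrib_right)
  also have "\<dots> = (\<Sum>t\<in>?S. F t * (\<Sum>u\<in>?U. E t u * D u z))"
    by (subst sum.swap) (simp add: sum_distrib_left mult.assoc)
  also have "\<dots> = (\<Sum>t\<in>?S. F t * lin_ext D (E t) z)"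
  proof (rule sum.cong[OF refl])
    fix t assume "t \<in> ?S"
    then have "{u. E t u \<noteq> 0} \<subseteq> ?U" by auto
    then show "F t * (\<Sum>u\<in>?U. E t u * D u z) = F t * lin_ext D (E t) z"
      by (simp add: lin_ext_superset[OF U])
  qed
  finally show "lin_ext D (lin_ext E F) z = lin_ext (\<lambda>t. lin_ext D (E t)) F z"
    by (simp add: lin_ext_def)
qed

lemma lin_ext_reindex:
  assumes "inj_on \<sigma> {s. F s \<noteq> 0}" "{t. G t \<noteq> 0} = \<sigma> ` {s. F s \<noteq> 0}"
    and "\<And>s. F s \<noteq> 0 \<Longrightarrow> G (\<sigma> s) = F s"
  shows "lin_ext D G = lin_ext (\<lambda>s. D (\<sigma> s)) F"
proof
  fix z
  have "lin_ext D G z = (\<Sum>t\<in>\<sigma> ` {s. F s \<noteq> 0}. G t * D t z)"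
    by (simp add: lin_ext_def assms(2))
  also have "\<dots> = (\<Sum>s\<in>{s. F s \<noteq> 0}. G (\<sigma> s) * D (\<sigma> s) z)"
    by (rule sum.reindex[OF assms(1), unfolded comp_def])
  finally show "lin_ext D G z = lin_ext (\<lambda>s. D (\<sigma> s)) F z"
    by (simp add: lin_ext_def assms(3))
qed

lemma ind_eq_unit_fun: "ind = unit_fun"
  by (auto simp: ind_def unit_fun_def)

lemma gelt_eq_unit_fun: "gelt g k b = unit_fun (k, g, b)"
  by (auto simp: gelt_def unit_fun_def)

lemma xgen_eq: "xgen n = unit_fun (0, \<one>\<^bsub>SG n\<^esub>, 0)"
  by (simp add: xgen_def gelt_eq_unit_fun)

lemma ygen_eq: "ygen n i = unit_fun (1, \<one>\<^bsub>SG n\<^esub>, i)"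
  by (simp add: ygen_def gelt_eq_unit_fun)

lemma wgen_eq: "wgen n = unit_fun (2, \<one>\<^bsub>SG n\<^esub>, 0)"
  by (simp add: wgen_def gelt_eq_unit_fun)

lemma in_P_iff: "in_P n k f \<longleftrightarrow> fin_supp f \<and> supp_on (\<lambda>t. fst t = k \<and> valid n t) f"
  by (auto simp: in_P_def supp_on_def)

lemma in_T_iff:
  "in_T n m F \<longleftrightarrow> fin_supp F \<and>
     supp_on (\<lambda>z. fst (fst z) + fst (snd z) = m \<and> valid n (fst z) \<and> valid n (snd z)) F"
  by (auto simp: in_T_def supp_on_def)

lemma in_P_unit_fun: "valid n t \<Longrightarrow> in_P n (fst t) (unit_fun t)"
  by (simp add: in_P_iff fin_supp_unit_fun supp_on_unit_fun)

lemma in_P_add: "in_P n k f \<Longrightarrow> in_P n k g \<Longrightarrow> in_P n k (f + g)"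
  unfolding in_P_iff by (blast intro: fin_supp_add supp_on_add)

lemma in_P_sum: "(\<And>i. i \<in> I \<Longrightarrow> in_P n k (f i)) \<Longrightarrow> in_P n k (\<Sum>i\<in>I. f i)"
  by (simp add: in_P_iff fin_supp_sum supp_on_sum)

lemma in_T_add: "in_T n m F \<Longrightarrow> in_T n m G \<Longrightarrow> in_T n m (F + G)"
  unfolding in_T_iff by (blast intro: fin_supp_add supp_on_add)

lemma in_T_sum: "(\<And>i. i \<in> I \<Longrightarrow> in_T n m (F i)) \<Longrightarrow> in_T n m (\<Sum>i\<in>I. F i)"
  by (simp add: in_T_iff fin_supp_sum supp_on_sum)

lemma in_T_lin_ext:
  "fin_supp f \<Longrightarrow> (\<And>t. f t \<noteq> 0 \<Longrightarrow> in_T n m (D t)) \<Longrightarrow> in_T n m (lin_ext D f)"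
  by (simp add: in_T_iff fin_supp_lin_ext supp_on_lin_ext)

lemma in_P_fin_supp: "in_P n k f \<Longrightarrow> fin_supp f"
  by (simp add: in_P_def)

lemma in_T_fin_supp: "in_T n m F \<Longrightarrow> fin_supp F"
  by (simp add: in_T_def)

lemma in_P_nonzero: "in_P n k f \<Longrightarrow> f t \<noteq> 0 \<Longrightarrow> fst t = k \<and> valid n t"
  unfolding in_P_def by blast

lemma in_T_nonzero:
  "in_T n m F \<Longrightarrow> F z \<noteq> 0 \<Longrightarrow> fst (fst z) + fst (snd z) = m \<and> valid n (fst z) \<and> valid n (snd z)"
  unfolding in_T_def by blast

lemma tensor_unit_fun: "tensor (unit_fun p) (unit_fun q) = unit_fun (p, q)"
  by (auto simp: tensor_def unit_fun_def)

lemma tensor_add_left: "tensor (u + u') v = tensor u v + tensor u' v"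
  by (auto simp: tensor_def algebra_simps)

lemma tensor_add_right: "tensor u (v + v') = tensor u v + tensor u v'"
  by (auto simp: tensor_def algebra_simps)

lemma tensor_diff_left: "tensor (u - u') v = tensor u v - tensor u' v"
  by (auto simp: tensor_def algebra_simps)

lemma tensor_diff_right: "tensor u (v - v') = tensor u v - tensor u v'"
  by (auto simp: tensor_def algebra_simps)

lemma tensor_zero_left: "tensor 0 v = 0"
  by (auto simp: tensor_def)

lemma tensor_zero_right: "tensor u 0 = 0"
  by (auto simp: tensor_def)

lemma fin_supp_tensor: "fin_supp u \<Longrightarrow> fin_supp v \<Longrightarrow> fin_supp (tensor u v)"
  by (rule finite_subset[of _ "{t. u t \<noteq> 0} \<times> {t. v t \<noteq> 0}"]) (auto simp: tensor_def)

lemma in_T_tensor: "in_P n r u \<Longrightarrow> in_P n s v \<Longrightarrow> in_T n (r + s) (tensor u v)"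
  unfolding in_P_def in_T_def
  by (auto simp: tensor_def intro: finite_subset[of _ "{t. u t \<noteq> 0} \<times> {t. v t \<noteq> 0}"])

definition translate :: "nat \<Rightarrow> elt \<Rightarrow> nat \<times> elt \<times> nat \<Rightarrow> nat \<times> elt \<times> nat" where
  "translate n g t = (fst t, g \<otimes>\<^bsub>SG n\<^esub> fst (snd t), snd (snd t))"

lemma fst_translate [simp]: "fst (translate n g t) = fst t"
  by (simp add: translate_def)

lemma valid_translate: "g \<in> carrier (SG n) \<Longrightarrow> valid n t \<Longrightarrow> valid n (translate n g t)"
  by (simp add: valid_def translate_def)

lemma inj_on_translate: "g \<in> carrier (SG n) \<Longrightarrow> inj_on (translate n g) {t. valid n t}"
  by (auto intro!: inj_onI simp: translate_def valid_def)

lemma translate_inverse: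
  "g \<in> carrier (SG n) \<Longrightarrow> valid n t \<Longrightarrow> translate n g (translate n (inv\<^bsub>SG n\<^esub> g) t) = t"
  by (simp add: translate_def valid_def sg.m_assoc[symmetric])

lemma act_translate:
  "g \<in> carrier (SG n) \<Longrightarrow> valid n t \<Longrightarrow> act n g f (translate n g t) = f t"
  by (auto simp: act_def translate_def valid_def sg.m_assoc[symmetric])

lemma tact_translate:
  "g \<in> carrier (SG n) \<Longrightarrow> valid n p \<Longrightarrow> valid n q \<Longrightarrow>
   tact n g F (translate n g p, translate n g q) = F (p, q)"
  by (auto simp: tact_def translate_def valid_def sg.m_assoc[symmetric])

lemma act_unit_fun:
  assumes "g \<in> carrier (SG n)" "h \<in> carrier (SG n)"
  shows "act n g (unit_fun (k, h, b)) = unit_fun (k, g \<otimes>\<^bsub>SG n\<^esub> h, b)"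
proof -
  have "x \<in> carrier (SG n) \<Longrightarrow> inv\<^bsub>SG n\<^esub> g \<otimes>\<^bsub>SG n\<^esub> x = h \<longleftrightarrow> x = g \<otimes>\<^bsub>SG n\<^esub> h" for x
    using assms by (metis sg.inv_closed sg.inv_solve_left)
  then show ?thesis using assms by (auto simp: act_def unit_fun_def)
qed

lemma act_zero: "act n g (\<lambda>_. 0) = (\<lambda>_. 0)"
  by (auto simp: act_def)

lemma act_add: "act n g (u + v) = act n g u + act n g v"
  by (auto simp: act_def)

lemma act_diff: "act n g (u - v) = act n g u - act n g v"
  by (auto simp: act_def)

lemma act_act:
  "g \<in> carrier (SG n) \<Longrightarrow> h \<in> carrier (SG n) \<Longrightarrow> act n g (act n h f) = act n (g \<otimes>\<^bsub>SG n\<^esub> h) f"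
  by (auto simp: act_def sg.inv_mult_group sg.m_assoc)

lemma act_one: "in_P n k f \<Longrightarrow> act n \<one>\<^bsub>SG n\<^esub> f = f"
  by (force simp: act_def in_P_def valid_def)

lemma tact_add: "tact n g (F + G) = tact n g F + tact n g G"
  by (auto simp: tact_def)

lemma tact_tact:
  "g \<in> carrier (SG n) \<Longrightarrow> h \<in> carrier (SG n) \<Longrightarrow> tact n g (tact n h F) = tact n (g \<otimes>\<^bsub>SG n\<^esub> h) F"
  by (auto simp: tact_def sg.inv_mult_group sg.m_assoc)

lemma tact_one: "in_T n m F \<Longrightarrow> tact n \<one>\<^bsub>SG n\<^esub> F = F"
  by (force simp: tact_def in_T_def valid_def)

lemma tact_tensor: "tact n g (tensor u v) = tensor (act n g u) (act n g v)"
  by (auto simp: tact_def tensor_def act_def)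

lemma tact_lin_ext: "tact n g (lin_ext D f) = lin_ext (\<lambda>t. tact n g (D t)) f"
  by (auto simp: tact_def lin_ext_def fun_eq_iff)

lemma support_act:
  assumes g: "g \<in> carrier (SG n)" and f: "in_P n k f"
  shows "{t. act n g f t \<noteq> 0} = translate n g ` {t. f t \<noteq> 0}"
proof (intro equalityI subsetI)
  fix t assume "t \<in> {t. act n g f t \<noteq> 0}"
  then obtain k h b where t: "t = (k, h, b)" "h \<in> carrier (SG n)"
    and nz: "f (translate n (inv\<^bsub>SG n\<^esub> g) t) \<noteq> 0"
    by (cases t) (auto simp: act_def translate_def split: if_splits)
  have "valid n (translate n (inv\<^bsub>SG n\<^esub> g) t)" using in_P_nonzero[OF f nz] by blast
  then have "valid n t" using t by (simp add: valid_def translate_def)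
  then have "t = translate n g (translate n (inv\<^bsub>SG n\<^esub> g) t)" by (simp add: translate_inverse[OF g])
  with nz show "t \<in> translate n g ` {t. f t \<noteq> 0}" by blast
next
  fix t assume "t \<in> translate n g ` {t. f t \<noteq> 0}"
  then obtain s where s: "t = translate n g s" "f s \<noteq> 0" by blast
  then have "act n g f t = f s" using act_translate[OF g] in_P_nonzero[OF f] by blast
  with s show "t \<in> {t. act n g f t \<noteq> 0}" by simp
qed

lemma support_tact:
  assumes g: "g \<in> carrier (SG n)" and F: "in_T n m F"
  shows "{z. tact n g F z \<noteq> 0} = map_prod (translate n g) (translate n g) ` {z. F z \<noteq> 0}"
proof (intro equalityI subsetI)
  fix z assume "z \<in> {z. tact n g F z \<noteq> 0}"
  then obtain p q where z: "z = (p, q)" "fst (snd p) \<in> carrier (SG n)" "fst (snd q) \<in> carrier (SG n)"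
    and nz: "F (translate n (inv\<^bsub>SG n\<^esub> g) p, translate n (inv\<^bsub>SG n\<^esub> g) q) \<noteq> 0"
    by (cases z) (auto simp: tact_def translate_def split: if_splits)
  have "valid n (translate n (inv\<^bsub>SG n\<^esub> g) p)" "valid n (translate n (inv\<^bsub>SG n\<^esub> g) q)"
    using in_T_nonzero[OF F nz] by auto
  then have "valid n p" "valid n q" using z by (simp_all add: valid_def translate_def)
  then have "z = map_prod (translate n g) (translate n g)
      (translate n (inv\<^bsub>SG n\<^esub> g) p, translate n (inv\<^bsub>SG n\<^esub> g) q)"
    by (simp add: z translate_inverse[OF g])
  with nz show "z \<in> map_prod (translate n g) (translate n g) ` {z. F z \<noteq> 0}" by blast
next
  fix z assume "z \<in> map_prod (translate n g) (translate n g) ` {z. F z \<noteq> 0}"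
  then obtain p q where pq: "z = (translate n g p, translate n g q)" "F (p, q) \<noteq> 0" by auto
  moreover have "valid n p" "valid n q" using in_T_nonzero[OF F pq(2)] by auto
  ultimately have "tact n g F z = F (p, q)" by (simp add: tact_translate[OF g])
  with pq show "z \<in> {z. tact n g F z \<noteq> 0}" by simp
qed

lemma lin_ext_act:
  assumes "g \<in> carrier (SG n)" "in_P n k f"
  shows "lin_ext D (act n g f) = lin_ext (\<lambda>t. D (translate n g t)) f"
proof (rule lin_ext_reindex[OF _ support_act[OF assms]])
  show "inj_on (translate n g) {t. f t \<noteq> 0}"
    by (rule inj_on_subset[OF inj_on_translate[OF assms(1)]]) (use in_P_nonzero[OF assms(2)] in auto)
qed (use act_translate[OF assms(1)] in_P_nonzero[OF assms(2)] in blast)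

lemma lin_ext_tact:
  assumes "g \<in> carrier (SG n)" "in_T n m F"
  shows "lin_ext D (tact n g F) = lin_ext (\<lambda>z. D (map_prod (translate n g) (translate n g) z)) F"
proof (rule lin_ext_reindex[OF _ support_tact[OF assms]])
  have "inj_on (map_prod (translate n g) (translate n g)) ({t. valid n t} \<times> {t. valid n t})"
    by (intro map_prod_inj_on inj_on_translate[OF assms(1)])
  then show "inj_on (map_prod (translate n g) (translate n g)) {z. F z \<noteq> 0}"
    by (rule inj_on_subset) (use in_T_nonzero[OF assms(2)] in force)
qed (use tact_translate[OF assms(1)] in_T_nonzero[OF assms(2)] in fastforce)

lemma in_P_act:
  assumes g: "g \<in> carrier (SG n)" and f: "in_P n k f"
  shows "in_P n k (act n g f)"
proof -
  have "fin_supp (act n g f)" using f by (simp add: support_act[OF g f] in_P_def)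
  moreover have "fst t = k \<and> valid n t" if nz: "act n g f t \<noteq> 0" for t
  proof -
    obtain s where "t = translate n g s" "f s \<noteq> 0" using support_act[OF g f] nz by blast
    then show ?thesis using in_P_nonzero[OF f] valid_translate[OF g] by auto
  qed
  ultimately show ?thesis unfolding in_P_def by blast
qed

lemma in_T_tact:
  assumes g: "g \<in> carrier (SG n)" and F: "in_T n m F"
  shows "in_T n m (tact n g F)"
proof -
  have "fin_supp (tact n g F)" using F by (simp add: support_tact[OF g F] in_T_def)
  moreover have "fst (fst z) + fst (snd z) = m \<and> valid n (fst z) \<and> valid n (snd z)"
    if nz: "tact n g F z \<noteq> 0" for z
  proof -
    have "z \<in> map_prod (translate n g) (translate n g) ` {z. F z \<noteq> 0}"
      using nz by (simp only: support_tact[OF g F, symmetric] mem_Collect_eq not_False_eq_True)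
    then obtain p q where "z = (translate n g p, translate n g q)" "F (p, q) \<noteq> 0"
      by auto
    then show ?thesis using in_T_nonzero[OF F] valid_translate[OF g] by fastforce
  qed
  ultimately show ?thesis unfolding in_T_def by blast
qed

definition tdiff_gen :: "nat \<Rightarrow> (nat \<times> elt \<times> nat) \<times> (nat \<times> elt \<times> nat) \<Rightarrow> tchain" where
  "tdiff_gen n pq = (\<lambda>z. tensor (d_gen n (fst pq)) (ind (snd pq)) z
       + (-1) ^ fst (fst pq) * tensor (ind (fst pq)) (d_gen n (snd pq)) z)"

lemma tdiff_eq_lin_ext: "tdiff n = lin_ext (tdiff_gen n)"
  by (auto simp: tdiff_def lin_ext_def tdiff_gen_def)

lemma dP_eq_lin_ext: "dP n = lin_ext (d_gen n)"
  by (auto simp: dP_def lin_ext_def)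

lemma d_gen_deg0: "d_gen n (0, g, b) = 0"
  by (simp add: d_gen_def zero_fun_def)

lemma d_gen_deg1:
  "g \<in> carrier (SG n) \<Longrightarrow> 1 \<le> b \<Longrightarrow> b \<le> n \<Longrightarrow>
   d_gen n (1, g, b) = unit_fun (0, g \<otimes>\<^bsub>SG n\<^esub> gen n b, 0) - unit_fun (0, g, 0)"
  by (simp add: d_gen_def gelt_eq_unit_fun xgen_eq act_diff act_unit_fun gen_in_carrier)

lemma dP_unit_fun: "dP n (unit_fun t) = d_gen n t"
  by (simp add: dP_eq_lin_ext lin_ext_unit_fun)

lemma dP_add: "fin_supp f \<Longrightarrow> fin_supp g \<Longrightarrow> dP n (f + g) = dP n f + dP n g"
  unfolding dP_eq_lin_ext by (rule lin_ext_add)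

lemma tdiff_add: "fin_supp F \<Longrightarrow> fin_supp G \<Longrightarrow> tdiff n (F + G) = tdiff n F + tdiff n G"
  unfolding tdiff_eq_lin_ext by (rule lin_ext_add)

lemma tdiff_sum:
  "finite I \<Longrightarrow> (\<And>i. i \<in> I \<Longrightarrow> fin_supp (F i)) \<Longrightarrow> tdiff n (\<Sum>i\<in>I. F i) = (\<Sum>i\<in>I. tdiff n (F i))"
  unfolding tdiff_eq_lin_ext by (rule lin_ext_sum)

lemma tdiff_tensor:
  assumes u: "in_P n r u" and v: "fin_supp v"
  shows "tdiff n (tensor u v) = tensor (dP n u) v + (\<lambda>z. (-1) ^ r * tensor u (dP n v) z)"
proof
  fix z :: "(nat \<times> elt \<times> nat) \<times> (nat \<times> elt \<times> nat)"
  obtain a b where z: "z = (a, b)" by (cases z)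
  let ?A = "{t. u t \<noteq> 0}" and ?B = "{t. v t \<noteq> 0}"
  have A: "finite ?A" using u by (simp add: in_P_def)
  have deg: "fst p = r" if "p \<in> ?A" for p using in_P_nonzero[OF u] that by auto
  have coeff: "(\<Sum>q\<in>S. f q * unit_fun q c) = f c" if "finite S" "{t. f t \<noteq> 0} \<subseteq> S" for S f c
    using that by (cases "c \<in> S") (auto simp: unit_fun_def if_distrib sum.delta' cong: if_cong)
  have "tdiff n (tensor u v) z = (\<Sum>pq\<in>?A \<times> ?B. tensor u v pq * tdiff_gen n pq z)"
    unfolding tdiff_eq_lin_ext using A v by (intro lin_ext_superset) (auto simp: tensor_def)
  also have "\<dots> = (\<Sum>pq\<in>?A \<times> ?B. u (fst pq) * v (snd pq) * (d_gen n (fst pq) a * unit_fun (snd pq) b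
       + (-1) ^ r * (unit_fun (fst pq) a * d_gen n (snd pq) b)))"
  proof (rule sum.cong[OF refl])
    fix pq assume "pq \<in> ?A \<times> ?B"
    then have "fst (fst pq) = r" using deg by auto
    then show "tensor u v pq * tdiff_gen n pq z = u (fst pq) * v (snd pq) * (d_gen n (fst pq) a
        * unit_fun (snd pq) b + (-1) ^ r * (unit_fun (fst pq) a * d_gen n (snd pq) b))"
      by (simp add: tdiff_gen_def tensor_def z ind_eq_unit_fun split: prod.splits)
  qed
  also have "\<dots> = (\<Sum>p\<in>?A. \<Sum>q\<in>?B. u p * v q * (d_gen n p a * unit_fun q b
       + (-1) ^ r * (unit_fun p a * d_gen n q b)))"
    unfolding sum.cartesian_product by (rule sum.cong) auto
  also have "\<dots> = (\<Sum>p\<in>?A. \<Sum>q\<in>?B. (u p * d_gen n p a) * (v q * unit_fun q b))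
      + (-1) ^ r * (\<Sum>p\<in>?A. \<Sum>q\<in>?B. (u p * unit_fun p a) * (v q * d_gen n q b))"
    by (simp only: sum.distrib[symmetric] sum_distrib_left)
      (intro sum.cong refl, simp only: distrib_left mult_ac)
  also have "\<dots> = (\<Sum>p\<in>?A. u p * d_gen n p a) * (\<Sum>q\<in>?B. v q * unit_fun q b)
      + (-1) ^ r * ((\<Sum>p\<in>?A. u p * unit_fun p a) * (\<Sum>q\<in>?B. v q * d_gen n q b))"
    by (simp only: sum_product)
  also have "\<dots> = dP n u a * v b + (-1) ^ r * (u a * dP n v b)"
    using A v by (simp add: coeff dP_def)
  finally show "tdiff n (tensor u v) z = (tensor (dP n u) v + (\<lambda>z. (-1) ^ r * tensor u (dP n v) z)) z"
    by (simp add: tensor_def z)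
qed

lemma tdiff_tensor_odd:
  "in_P n r u \<Longrightarrow> odd r \<Longrightarrow> fin_supp v \<Longrightarrow> tdiff n (tensor u v) = tensor (dP n u) v - tensor u (dP n v)"
  by (simp add: tdiff_tensor fun_eq_iff)

lemma tdiff_tensor_even:
  "in_P n r u \<Longrightarrow> even r \<Longrightarrow> fin_supp v \<Longrightarrow> tdiff n (tensor u v) = tensor (dP n u) v + tensor u (dP n v)"
  by (simp add: tdiff_tensor fun_eq_iff)

lemma d_gen_translate:
  "g \<in> carrier (SG n) \<Longrightarrow> valid n t \<Longrightarrow> d_gen n (translate n g t) = act n g (d_gen n t)"
  by (cases t) (simp add: translate_def valid_def d_gen_def act_act act_zero)

lemma ind_translate:
  "g \<in> carrier (SG n) \<Longrightarrow> valid n t \<Longrightarrow> ind (translate n g t) = act n g (ind t)"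
  by (cases t) (simp add: translate_def valid_def ind_eq_unit_fun act_unit_fun)

lemma tdiff_tact:
  assumes g: "g \<in> carrier (SG n)" and F: "in_T n m F"
  shows "tdiff n (tact n g F) = tact n g (tdiff n F)"
proof -
  have "tdiff n (tact n g F) = lin_ext (\<lambda>z. tdiff_gen n (map_prod (translate n g) (translate n g) z)) F"
    unfolding tdiff_eq_lin_ext by (rule lin_ext_tact[OF assms])
  also have "\<dots> = lin_ext (\<lambda>z. tact n g (tdiff_gen n z)) F"
  proof (rule lin_ext_cong)
    fix z assume "F z \<noteq> 0"
    then have "valid n (fst z)" "valid n (snd z)" using in_T_nonzero[OF F] by auto
    moreover have "tact n g (\<lambda>z. A z + c * B z) = (\<lambda>z. tact n g A z + c * tact n g B z)"
      for A B :: tchain and c :: int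
      by (auto simp: tact_def)
    ultimately show "tdiff_gen n (map_prod (translate n g) (translate n g) z) = tact n g (tdiff_gen n z)"
      using g by (cases z) (simp add: tdiff_gen_def d_gen_translate ind_translate tact_tensor)
  qed
  also have "\<dots> = tact n g (tdiff n F)"
    by (simp add: tdiff_eq_lin_ext tact_lin_ext)
  finally show ?thesis .
qed

subsection \<open>A telescoping identity\<close>

text \<open>
  The degree-two chain map condition on \<open>w\<close>, written out for an arbitrary biadditive pairing
  \<open>T\<close>; it holds without identifying \<open>X (Suc m)\<close> with \<open>X 1\<close>.
\<close>

lemma bilinear_telescope:
  fixes T :: "'a::ab_group_add \<Rightarrow> 'a \<Rightarrow> 'b::ab_group_add" and X Y Y' Z :: "nat \<Rightarrow> 'a"
  assumes add_left: "\<And>u v w. T (u + v) w = T u w + T v w"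
    and add_right: "\<And>u v w. T u (v + w) = T u v + T u w"
  shows "T (X 1) (\<Sum>i\<in>{1..m}. Y i + Y' i)
    + (\<Sum>i\<in>{1..m}. (\<Sum>j\<in>{1..<i}. T (X (Suc j) - X j) (Y i) - T (Y j + Y' j) (Z i - X i))
                    + (\<Sum>j\<in>{1..<i}. T (X (Suc j) - X j) (Y' i) - T (Y j + Y' j) (X (Suc i) - Z i))
                    + (T (Z i - X i) (Y' i) - T (Y i) (X (Suc i) - Z i)))
    + T (\<Sum>i\<in>{1..m}. Y i + Y' i) (X (Suc m))
    = (\<Sum>i\<in>{1..m}. T (Y i) (Z i) + T (X i) (Y i) + T (Y' i) (X (Suc i)) + T (Z i) (Y' i))"
proof (induction m)
  case 0
  show ?case using add_left[of 0 0 "X 1"] add_right[of "X 1" 0 0] by simp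
next
  case (Suc m)
  have diff_left: "T (u - v) w = T u w - T v w" for u v w
    by (metis add_left add_diff_cancel eq_diff_eq)
  have diff_right: "T u (v - w) = T u v - T u w" for u v w
    by (metis add_right add_diff_cancel eq_diff_eq)
  have sum_left: "T (\<Sum>j\<in>J. f j) w = (\<Sum>j\<in>J. T (f j) w)" for f and J :: "nat set" and w
    using add_left[of 0 0 w] by (induction J rule: infinite_finite_induct) (auto simp: add_left)
  let ?S = "\<Sum>i\<in>{1..m}. Y i + Y' i"
  have telescope: "(\<Sum>j\<in>{1..<Suc m}. X (Suc j) - X j) = X (Suc m) - X 1"
    by (rule sum_Suc_diff') simp
  have inner: "(\<Sum>j\<in>{1..<Suc m}. T (X (Suc j) - X j) V - T (Y j + Y' j) W)
      = T (X (Suc m) - X 1) V - T ?S W" for V W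
  proof -
    have "(\<Sum>j\<in>{1..<Suc m}. T (X (Suc j) - X j) V - T (Y j + Y' j) W)
        = (\<Sum>j\<in>{1..<Suc m}. T (X (Suc j) - X j) V) - (\<Sum>j\<in>{1..<Suc m}. T (Y j + Y' j) W)"
      by (rule sum_subtractf)
    also have "\<dots> = T (\<Sum>j\<in>{1..<Suc m}. X (Suc j) - X j) V - T (\<Sum>j\<in>{1..<Suc m}. Y j + Y' j) W"
      by (simp only: sum_left)
    also have "\<dots> = T (X (Suc m) - X 1) V - T ?S W"
      by (subst telescope) (simp only: atLeastLessThanSuc_atLeastAtMost)
    finally show ?thesis .
  qed
  have "\<not> Suc m < 1" by simp
  then show ?case
    unfolding sum.cl_ivl_Suc if_not_P inner
    using Suc.IH by (simp add: add_left add_right diff_left diff_right algebra_simps)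
qed

text \<open>In the notation of the header, with \<open>s\<^sub>i = sqprod n i\<close>.\<close>

definition Y_sq :: "nat \<Rightarrow> nat \<Rightarrow> chain" where
  "Y_sq n i = unit_fun (1, sqprod n i, i)"

definition Y'_sq :: "nat \<Rightarrow> nat \<Rightarrow> chain" where
  "Y'_sq n i = unit_fun (1, sqprod n i \<otimes>\<^bsub>SG n\<^esub> gen n i, i)"

definition X_sq :: "nat \<Rightarrow> nat \<Rightarrow> chain" where
  "X_sq n i = unit_fun (0, sqprod n i, 0)"

definition Z_sq :: "nat \<Rightarrow> nat \<Rightarrow> chain" where
  "Z_sq n i = unit_fun (0, sqprod n i \<otimes>\<^bsub>SG n\<^esub> gen n i, 0)"

lemma X_sq_1: "X_sq n 1 = xgen n"
  unfolding X_sq_def xgen_eq sqprod_1 ..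

lemma X_sq_Suc_n: "X_sq n (Suc n) = xgen n"
  by (simp add: X_sq_def xgen_eq sqprod_Suc_n)

lemma smul_grelt_add:
  assumes "a \<in> carrier (SG n)" "b \<in> carrier (SG n)"
  shows "smul n (grelt a + grelt b) f = act n a f + act n b f"
proof (cases "a = b")
  case True
  then have "{g \<in> carrier (SG n). (grelt a + grelt b) g \<noteq> 0} = {a}"
    using assms by (auto simp: grelt_def)
  with True show ?thesis by (auto simp: smul_def grelt_def fun_eq_iff)
next
  case False
  then have "{g \<in> carrier (SG n). (grelt a + grelt b) g \<noteq> 0} = {a, b}"
    using assms by (auto simp: grelt_def)
  with False show ?thesis by (auto simp: smul_def grelt_def fun_eq_iff)
qed

context
  fixes n i :: nat
  assumes i: "1 \<le> i" "i \<le> n"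
begin

lemma sqprod_gen_in_carrier: "sqprod n i \<otimes>\<^bsub>SG n\<^esub> gen n i \<in> carrier (SG n)"
  using i by (simp add: sqprod_in_carrier gen_in_carrier)

lemma act_sqprod_ygen: "act n (sqprod n i) (ygen n i) = Y_sq n i"
  using i by (simp add: ygen_eq act_unit_fun sqprod_in_carrier Y_sq_def)

lemma act_sqprod_gen_ygen: "act n (sqprod n i \<otimes>\<^bsub>SG n\<^esub> gen n i) (ygen n i) = Y'_sq n i"
  by (simp add: ygen_eq act_unit_fun sqprod_gen_in_carrier Y'_sq_def)

lemma act_sqprod_fox_term:
  "act n (sqprod n i) (ygen n i + act n (gen n i) (ygen n i)) = Y_sq n i + Y'_sq n i"
  using i by (simp add: act_add act_act sqprod_in_carrier gen_in_carrier
      act_sqprod_ygen act_sqprod_gen_ygen)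

lemma in_P_Y_sq: "in_P n 1 (Y_sq n i)" "in_P n 1 (Y'_sq n i)"
  using i sqprod_gen_in_carrier in_P_unit_fun[of n "(1, _, i)"]
  by (auto simp: Y_sq_def Y'_sq_def valid_def basis_set_def sqprod_in_carrier)

lemma in_P_Y_sq_add: "in_P n 1 (Y_sq n i + Y'_sq n i)"
  by (intro in_P_add in_P_Y_sq)

lemma dP_Y_sq: "dP n (Y_sq n i) = Z_sq n i - X_sq n i"
  using i by (simp add: Y_sq_def Z_sq_def X_sq_def dP_unit_fun d_gen_def gelt_eq_unit_fun xgen_eq
      act_diff act_unit_fun sqprod_in_carrier gen_in_carrier)

lemma dP_Y'_sq: "dP n (Y'_sq n i) = X_sq n (Suc i) - Z_sq n i"
  using i sqprod_gen_in_carrier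
  by (simp add: Y'_sq_def Z_sq_def X_sq_def dP_unit_fun d_gen_def gelt_eq_unit_fun xgen_eq
      act_diff act_unit_fun gen_in_carrier sqprod_Suc)

lemma dP_Y_sq_add: "dP n (Y_sq n i + Y'_sq n i) = X_sq n (Suc i) - X_sq n i"
  using in_P_Y_sq by (simp add: dP_add in_P_def dP_Y_sq dP_Y'_sq)

lemma fox_relator_ygen:
  "smul n (fox n i (relator n)) (ygen n i) = Y_sq n i + Y'_sq n i"
  using i sqprod_gen_in_carrier
  by (simp add: fox_relator smul_grelt_add sqprod_in_carrier act_sqprod_ygen act_sqprod_gen_ygen)

end

lemma in_P_boundary_w: "in_P n 1 (\<Sum>i\<in>{1..n}. Y_sq n i + Y'_sq n i)"
  by (intro in_P_sum in_P_Y_sq_add) auto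

lemma d_gen_w: "d_gen n (2, g, 0) = act n g (\<Sum>i\<in>{1..n}. Y_sq n i + Y'_sq n i)"
  by (simp add: d_gen_def fox_relator_ygen)

lemma dP_wgen: "dP n (wgen n) = (\<Sum>i\<in>{1..n}. Y_sq n i + Y'_sq n i)"
  unfolding wgen_eq dP_unit_fun d_gen_w by (rule act_one[OF in_P_boundary_w])

subsection \<open>The diagonal on the basis\<close>

definition diag11 :: "nat \<Rightarrow> tchain" where
  "diag11 n = (\<Sum>i\<in>{1..n}.
            (\<Sum>j\<in>{1..<i}. tensor (act n (sqprod n j) (ygen n j + act n (gen n j) (ygen n j)))
                                  (act n (sqprod n i) (ygen n i)))
          + (\<Sum>j\<in>{1..<i}. tensor (act n (sqprod n j) (ygen n j + act n (gen n j) (ygen n j)))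
                                  (act n (mult (surface_group n) (sqprod n i) (gen n i)) (ygen n i)))
          + tensor (act n (sqprod n i) (ygen n i))
                   (act n (mult (surface_group n) (sqprod n i) (gen n i)) (ygen n i)))"

definition diag_w :: "nat \<Rightarrow> tchain" where
  "diag_w n = tensor (xgen n) (wgen n) + diag11 n + tensor (wgen n) (xgen n)"

definition diag_gen :: "nat \<Rightarrow> nat \<times> elt \<times> nat \<Rightarrow> tchain" where
  "diag_gen n t = (case t of (k, g, b) \<Rightarrow>
     if k = 0 then tensor (unit_fun t) (unit_fun t)
     else if k = 1 then tensor (unit_fun t) (unit_fun (0, g \<otimes>\<^bsub>SG n\<^esub> gen n b, 0))
                      + tensor (unit_fun (0, g, 0)) (unit_fun t)
     else if k = 2 then tact n g (diag_w n)
     else 0)"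

lemma diag11_eq: "diag11 n = (\<Sum>i\<in>{1..n}.
     (\<Sum>j\<in>{1..<i}. tensor (Y_sq n j + Y'_sq n j) (Y_sq n i))
   + (\<Sum>j\<in>{1..<i}. tensor (Y_sq n j + Y'_sq n j) (Y'_sq n i))
   + tensor (Y_sq n i) (Y'_sq n i))"
  unfolding diag11_def
  by (intro sum.cong refl arg_cong2[where f = "(+)"])
    (auto simp: act_sqprod_fox_term act_sqprod_ygen act_sqprod_gen_ygen)

lemma in_T_diag11: "in_T n 2 (diag11 n)"
  using in_T_tensor[OF in_P_Y_sq_add in_P_Y_sq(1)] in_T_tensor[OF in_P_Y_sq_add in_P_Y_sq(2)]
    in_T_tensor[OF in_P_Y_sq(1) in_P_Y_sq(2)]
  unfolding diag11_eq by (intro in_T_add in_T_sum) (auto simp: numeral_2_eq_2)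

lemma in_P_xgen: "in_P n 0 (xgen n)"
  using in_P_unit_fun[of n "(0, \<one>\<^bsub>SG n\<^esub>, 0)"] by (simp add: xgen_eq valid_def basis_set_def)

lemma in_P_wgen: "in_P n 2 (wgen n)"
  using in_P_unit_fun[of n "(2, \<one>\<^bsub>SG n\<^esub>, 0)"] by (simp add: wgen_eq valid_def basis_set_def)

lemma in_T_diag_w: "in_T n 2 (diag_w n)"
proof -
  have "in_T n 2 (tensor (xgen n) (wgen n))" "in_T n 2 (tensor (wgen n) (xgen n))"
    using in_T_tensor[OF in_P_xgen in_P_wgen] in_T_tensor[OF in_P_wgen in_P_xgen]
    by (simp_all only: add_0_left add_0_right)
  then show ?thesis unfolding diag_w_def by (intro in_T_add in_T_diag11)
qed

lemma fin_supp_Y_sq: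
  "fin_supp (Y_sq n i)" "fin_supp (Y'_sq n i)" "fin_supp (Y_sq n i + Y'_sq n i)"
proof -
  show Y: "fin_supp (Y_sq n i)" and Y': "fin_supp (Y'_sq n i)"
    by (simp_all add: Y_sq_def Y'_sq_def fin_supp_unit_fun)
  show "fin_supp (Y_sq n i + Y'_sq n i)" by (rule fin_supp_add[OF Y Y'])
qed

lemma tdiff_sum_tensor_Y_sq:
  assumes "i \<le> n" "fin_supp V"
  shows "tdiff n (\<Sum>j\<in>{1..<i}. tensor (Y_sq n j + Y'_sq n j) V)
    = (\<Sum>j\<in>{1..<i}. tensor (X_sq n (Suc j) - X_sq n j) V - tensor (Y_sq n j + Y'_sq n j) (dP n V))"
proof -
  have "tdiff n (\<Sum>j\<in>{1..<i}. tensor (Y_sq n j + Y'_sq n j) V)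
      = (\<Sum>j\<in>{1..<i}. tdiff n (tensor (Y_sq n j + Y'_sq n j) V))"
    using assms by (intro tdiff_sum fin_supp_tensor fin_supp_Y_sq) auto
  also have "\<dots> = (\<Sum>j\<in>{1..<i}. tensor (X_sq n (Suc j) - X_sq n j) V
      - tensor (Y_sq n j + Y'_sq n j) (dP n V))"
  proof (rule sum.cong[OF refl])
    fix j assume "j \<in> {1..<i}"
    then have j: "1 \<le> j" "j \<le> n" using assms by auto
    show "tdiff n (tensor (Y_sq n j + Y'_sq n j) V) = tensor (X_sq n (Suc j) - X_sq n j) V
        - tensor (Y_sq n j + Y'_sq n j) (dP n V)"
      using tdiff_tensor_odd[OF in_P_Y_sq_add[OF j] _ assms(2)] by (simp add: dP_Y_sq_add[OF j])
  qed
  finally show ?thesis .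
qed

lemma tdiff_diag11: "tdiff n (diag11 n) = (\<Sum>i\<in>{1..n}.
     (\<Sum>j\<in>{1..<i}. tensor (X_sq n (Suc j) - X_sq n j) (Y_sq n i)
                    - tensor (Y_sq n j + Y'_sq n j) (Z_sq n i - X_sq n i))
   + (\<Sum>j\<in>{1..<i}. tensor (X_sq n (Suc j) - X_sq n j) (Y'_sq n i)
                    - tensor (Y_sq n j + Y'_sq n j) (X_sq n (Suc i) - Z_sq n i))
   + (tensor (Z_sq n i - X_sq n i) (Y'_sq n i) - tensor (Y_sq n i) (X_sq n (Suc i) - Z_sq n i)))"
  (is "_ = ?rhs")
proof -
  have "tdiff n (diag11 n) = (\<Sum>i\<in>{1..n}.
       tdiff n (\<Sum>j\<in>{1..<i}. tensor (Y_sq n j + Y'_sq n j) (Y_sq n i))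
     + tdiff n (\<Sum>j\<in>{1..<i}. tensor (Y_sq n j + Y'_sq n j) (Y'_sq n i))
     + tdiff n (tensor (Y_sq n i) (Y'_sq n i)))"
    unfolding diag11_eq
    by (simp only: tdiff_sum tdiff_add finite_atLeastAtMost fin_supp_Y_sq fin_supp_add fin_supp_sum
        fin_supp_tensor simp_thms)
  also have "\<dots> = ?rhs"
  proof (rule sum.cong[OF refl], goal_cases)
    case (1 i)
    then have i: "1 \<le> i" "i \<le> n" by auto
    show ?case
      by (simp only: tdiff_sum_tensor_Y_sq[OF i(2) fin_supp_Y_sq(1)]
          tdiff_sum_tensor_Y_sq[OF i(2) fin_supp_Y_sq(2)] dP_Y_sq[OF i] dP_Y'_sq[OF i]
          tdiff_tensor_odd[OF in_P_Y_sq(1)[OF i] odd_one fin_supp_Y_sq(2)])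
  qed
  finally show ?thesis .
qed

lemma diag_gen_deg1:
  "diag_gen n (1, g, b) = tensor (unit_fun (1, g, b)) (unit_fun (0, g \<otimes>\<^bsub>SG n\<^esub> gen n b, 0))
     + tensor (unit_fun (0, g, 0)) (unit_fun (1, g, b))"
  by (simp add: diag_gen_def)

lemma diag_gen_Y_sq:
  assumes "1 \<le> i" "i \<le> n"
  shows "lin_ext (diag_gen n) (Y_sq n i + Y'_sq n i) =
    tensor (Y_sq n i) (Z_sq n i) + tensor (X_sq n i) (Y_sq n i)
    + tensor (Y'_sq n i) (X_sq n (Suc i)) + tensor (Z_sq n i) (Y'_sq n i)"
proof -
  have "sqprod n i \<otimes>\<^bsub>SG n\<^esub> gen n i \<otimes>\<^bsub>SG n\<^esub> gen n i = sqprod n (Suc i)"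
    using assms by (simp add: sqprod_Suc)
  then show ?thesis
    unfolding lin_ext_add[OF in_P_fin_supp[OF in_P_Y_sq(1)[OF assms]] in_P_fin_supp[OF in_P_Y_sq(2)[OF assms]]]
    by (simp only: Y_sq_def Y'_sq_def X_sq_def Z_sq_def lin_ext_unit_fun diag_gen_deg1 add.assoc)
qed

lemma dP_xgen: "dP n (xgen n) = 0"
  by (simp add: xgen_eq dP_unit_fun d_gen_def zero_fun_def)

lemma tdiff_diag_w: "tdiff n (diag_w n) = lin_ext (diag_gen n) (dP n (wgen n))"
proof -
  let ?S = "\<Sum>i\<in>{1..n}. Y_sq n i + Y'_sq n i"
  have fin: "fin_supp (xgen n)" "fin_supp (wgen n)" "fin_supp (diag11 n)"
    using in_P_xgen in_P_wgen in_T_diag11 by (auto intro: in_P_fin_supp in_T_fin_supp)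
  have "tdiff n (diag_w n)
      = tdiff n (tensor (xgen n) (wgen n)) + tdiff n (diag11 n) + tdiff n (tensor (wgen n) (xgen n))"
    unfolding diag_w_def
    by (simp only: tdiff_add fin fin_supp_tensor fin_supp_add)
  also have "\<dots> = tensor (X_sq n 1) ?S + tdiff n (diag11 n) + tensor ?S (X_sq n (Suc n))"
    unfolding tdiff_tensor_even[OF in_P_xgen even_zero fin(2)]
      tdiff_tensor_even[OF in_P_wgen even_numeral fin(1)]
    by (simp only: dP_xgen dP_wgen tensor_zero_left tensor_zero_right X_sq_1 X_sq_Suc_n
        add_0_left add_0_right)
  also have "\<dots> = (\<Sum>i\<in>{1..n}. tensor (Y_sq n i) (Z_sq n i) + tensor (X_sq n i) (Y_sq n i)
       + tensor (Y'_sq n i) (X_sq n (Suc i)) + tensor (Z_sq n i) (Y'_sq n i))"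
    unfolding tdiff_diag11 by (rule bilinear_telescope[of tensor, OF tensor_add_left tensor_add_right])
  also have "\<dots> = (\<Sum>i\<in>{1..n}. lin_ext (diag_gen n) (Y_sq n i + Y'_sq n i))"
    by (rule sum.cong[OF refl], rule diag_gen_Y_sq[symmetric]) auto
  also have "\<dots> = lin_ext (diag_gen n) ?S"
    by (rule lin_ext_sum[symmetric], simp, rule in_P_fin_supp, rule in_P_Y_sq_add) auto
  finally show ?thesis by (simp only: dP_wgen)
qed

lemma in_T_diag_gen: "valid n t \<Longrightarrow> in_T n (fst t) (diag_gen n t)"
proof (cases t)
  case (fields k g b)
  assume t: "valid n t"
  then have g: "g \<in> carrier (SG n)" and b: "b \<in> basis_set n k" by (auto simp: fields valid_def)
  consider "k = 0" | "k = 1" "1 \<le> b" "b \<le> n" | "k = 2"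
    using b by (auto simp: basis_set_def split: if_splits)
  then show ?thesis
  proof cases
    case 1
    then show ?thesis using in_T_tensor[OF in_P_unit_fun[OF t] in_P_unit_fun[OF t]]
      by (simp add: fields diag_gen_def)
  next
    case 2
    have y: "in_P n 1 (unit_fun (1, g, b))" using in_P_unit_fun[OF t] 2 by (simp add: fields)
    have "valid n (0, g, 0)" "valid n (0, g \<otimes>\<^bsub>SG n\<^esub> gen n b, 0)"
      using g 2 by (auto simp: valid_def basis_set_def gen_in_carrier)
    then have x: "in_P n 0 (unit_fun (0, g, 0))" "in_P n 0 (unit_fun (0, g \<otimes>\<^bsub>SG n\<^esub> gen n b, 0))"
      using in_P_unit_fun by fastforce+
    have "in_T n 1 (diag_gen n (1, g, b))"
      unfolding diag_gen_deg1 using in_T_tensor[OF y x(2)] in_T_tensor[OF x(1) y]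
      by (intro in_T_add) simp_all
    then show ?thesis using 2 by (simp add: fields)
  next
    case 3
    then show ?thesis using in_T_tact[OF g in_T_diag_w] by (simp add: fields diag_gen_def)
  qed
qed

lemma diag_gen_translate:
  assumes "g \<in> carrier (SG n)" "valid n t"
  shows "diag_gen n (translate n g t) = tact n g (diag_gen n t)"
proof (cases t)
  case (fields k h b)
  with assms have "h \<in> carrier (SG n)" "b \<in> basis_set n k" by (auto simp: valid_def)
  with assms show ?thesis
    by (auto simp: fields diag_gen_def translate_def tact_add tact_tensor act_unit_fun tact_tact
        basis_set_def gen_in_carrier sg.m_assoc split: if_splits)
qed

lemma fin_supp_d_gen:
  assumes "valid n t"
  shows "fin_supp (d_gen n t)"
proof (cases t)
  case (fields k g b)
  with assms have g: "g \<in> carrier (SG n)" and b: "b \<in> basis_set n k" by (auto simp: valid_def)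
  consider "k = 1" "1 \<le> b" "b \<le> n" | "k = 2" | "k \<noteq> 1" "k \<noteq> 2"
    using b by (auto simp: basis_set_def split: if_splits)
  then show ?thesis
  proof cases
    case 1
    then show ?thesis
      unfolding fields using d_gen_deg1[OF g 1(2,3)] fin_supp_diff[OF fin_supp_unit_fun fin_supp_unit_fun]
      by simp
  next
    case 2
    then show ?thesis
      using in_P_act[OF g in_P_boundary_w] b by (simp add: fields basis_set_def d_gen_w in_P_def)
  qed (simp add: fields d_gen_def)
qed

text \<open>Both sides equal \<open>g a\<^sub>b x \<otimes> g a\<^sub>b x - g x \<otimes> g x\<close>.\<close>

lemma tdiff_diag_gen_deg1:
  assumes g: "g \<in> carrier (SG n)" and b: "1 \<le> b" "b \<le> n"
  shows "tdiff n (diag_gen n (1, g, b)) = lin_ext (diag_gen n) (d_gen n (1, g, b))"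
proof -
  let ?x = "(0::nat, g, 0::nat)" and ?ax = "(0::nat, g \<otimes>\<^bsub>SG n\<^esub> gen n b, 0::nat)"
  have y: "in_P n 1 (unit_fun (1, g, b))"
    using in_P_unit_fun[of n "(1, g, b)"] g b by (simp add: valid_def basis_set_def)
  have x: "in_P n 0 (unit_fun ?x)"
    using in_P_unit_fun[of n ?x] g by (simp add: valid_def basis_set_def)
  have "tdiff n (diag_gen n (1, g, b))
      = tensor (unit_fun ?ax) (unit_fun ?ax) - tensor (unit_fun ?x) (unit_fun ?x)"
    using y x
    by (simp add: diag_gen_def tdiff_add fin_supp_tensor fin_supp_unit_fun tdiff_tensor_odd
        tdiff_tensor_even dP_unit_fun d_gen_deg1[OF g b, unfolded One_nat_def] d_gen_deg0
        tensor_diff_left tensor_diff_right tensor_zero_left tensor_zero_right zero_fun_def[symmetric])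
  then show ?thesis
    by (simp add: d_gen_deg1[OF g b, unfolded One_nat_def] lin_ext_diff fin_supp_unit_fun
        lin_ext_unit_fun diag_gen_def)
qed

lemma tdiff_diag_gen_deg2:
  assumes g: "g \<in> carrier (SG n)"
  shows "tdiff n (diag_gen n (2, g, 0)) = lin_ext (diag_gen n) (d_gen n (2, g, 0))"
proof -
  let ?S = "\<Sum>i\<in>{1..n}. Y_sq n i + Y'_sq n i"
  have "tdiff n (diag_gen n (2, g, 0)) = tact n g (tdiff n (diag_w n))"
    by (simp add: diag_gen_def tdiff_tact[OF g in_T_diag_w])
  also have "\<dots> = lin_ext (\<lambda>s. tact n g (diag_gen n s)) ?S"
    by (simp add: tdiff_diag_w dP_wgen tact_lin_ext)
  also have "\<dots> = lin_ext (\<lambda>s. diag_gen n (translate n g s)) ?S"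
    using in_P_nonzero[OF in_P_boundary_w] diag_gen_translate[OF g]
    by (intro lin_ext_cong) auto
  also have "\<dots> = lin_ext (diag_gen n) (act n g ?S)"
    by (rule lin_ext_act[OF g in_P_boundary_w, symmetric])
  finally show ?thesis by (simp only: d_gen_w)
qed

lemma tdiff_diag_gen:
  assumes t: "valid n t" "0 < fst t"
  shows "tdiff n (diag_gen n t) = lin_ext (diag_gen n) (d_gen n t)"
proof (cases t)
  case (fields k g b)
  with t have g: "g \<in> carrier (SG n)" and b: "b \<in> basis_set n k" by (auto simp: valid_def)
  consider "k = 1" "1 \<le> b" "b \<le> n" | "k = 2" "b = 0"
    using b t by (auto simp: fields basis_set_def split: if_splits)
  then show ?thesis
    by cases (simp_all add: fields tdiff_diag_gen_deg1[OF g, unfolded One_nat_def]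
        tdiff_diag_gen_deg2[OF g])
qed

definition diagonal :: "nat \<Rightarrow> nat \<Rightarrow> chain \<Rightarrow> tchain" where
  "diagonal n k = lin_ext (diag_gen n)"

lemma in_T_diagonal: "in_P n k f \<Longrightarrow> in_T n k (diagonal n k f)"
  unfolding diagonal_def
  by (rule in_T_lin_ext[OF in_P_fin_supp]) (use in_T_diag_gen in_P_nonzero in fastforce)+

lemma diagonal_add: "in_P n k f \<Longrightarrow> in_P n k f' \<Longrightarrow> diagonal n k (f + f') = diagonal n k f + diagonal n k f'"
  unfolding diagonal_def by (intro lin_ext_add in_P_fin_supp)

lemma diagonal_act:
  assumes g: "g \<in> carrier (SG n)" and f: "in_P n k f"
  shows "diagonal n k (act n g f) = tact n g (diagonal n k f)"
proof -
  have "lin_ext (diag_gen n) (act n g f) = lin_ext (\<lambda>t. diag_gen n (translate n g t)) f"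
    by (rule lin_ext_act[OF g f])
  also have "\<dots> = lin_ext (\<lambda>t. tact n g (diag_gen n t)) f"
    by (rule lin_ext_cong) (use diag_gen_translate[OF g] in_P_nonzero[OF f] in blast)
  finally show ?thesis by (simp add: diagonal_def tact_lin_ext)
qed

lemma tdiff_diagonal:
  assumes f: "in_P n (Suc k) f"
  shows "tdiff n (diagonal n (Suc k) f) = diagonal n k (dP n f)"
proof -
  have valid: "valid n t" "fst t = Suc k" if "f t \<noteq> 0" for t
    using in_P_nonzero[OF f that] by auto
  have "tdiff n (lin_ext (diag_gen n) f) = lin_ext (\<lambda>t. tdiff n (diag_gen n t)) f"
    unfolding tdiff_eq_lin_ext
    by (rule lin_ext_lin_ext[OF in_P_fin_supp[OF f]]) (use in_T_diag_gen valid in_T_fin_supp in blast)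
  also have "\<dots> = lin_ext (\<lambda>t. lin_ext (diag_gen n) (d_gen n t)) f"
    by (rule lin_ext_cong) (simp add: valid tdiff_diag_gen)
  also have "\<dots> = lin_ext (diag_gen n) (dP n f)"
    unfolding dP_eq_lin_ext
    by (rule lin_ext_lin_ext[OF in_P_fin_supp[OF f], symmetric]) (use valid fin_supp_d_gen in blast)
  finally show ?thesis by (simp add: diagonal_def)
qed

lemma teps_eq_lin_ext:
  "teps F = lin_ext (\<lambda>pq (_ :: unit). if fst (fst pq) = 0 \<and> fst (snd pq) = 0 then 1 else 0) F ()"
  by (simp add: teps_def lin_ext_def)

lemma epsP_eq_lin_ext: "epsP f = lin_ext (\<lambda>_ (_ :: unit). 1) f ()"
  by (simp add: epsP_def lin_ext_def)

lemma teps_diagonal: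
  assumes f: "in_P n 0 f"
  shows "teps (diagonal n 0 f) = epsP f"
proof -
  have valid: "valid n t" "fst t = 0" if "f t \<noteq> 0" for t
    using in_P_nonzero[OF f that] by auto
  have "teps (lin_ext (diag_gen n) f)
      = lin_ext (\<lambda>t. lin_ext (\<lambda>pq _. if fst (fst pq) = 0 \<and> fst (snd pq) = 0 then 1 else 0)
          (diag_gen n t)) f ()"
    unfolding teps_eq_lin_ext
    by (subst lin_ext_lin_ext[OF in_P_fin_supp[OF f]]) (use in_T_diag_gen valid in_T_fin_supp in blast)+
  also have "\<dots> = lin_ext (\<lambda>_ _. 1) f ()"
  proof (rule fun_cong[where x = "()"], rule lin_ext_cong)
    fix t assume "f t \<noteq> 0"
    then obtain g b where "t = (0, g, b)" using valid by (cases t) auto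
    then show "lin_ext (\<lambda>pq _. if fst (fst pq) = 0 \<and> fst (snd pq) = 0 then 1 else 0) (diag_gen n t)
        = (\<lambda>_. 1)"
      by (simp add: diag_gen_def tensor_unit_fun lin_ext_unit_fun)
  qed
  finally show ?thesis by (simp add: diagonal_def epsP_eq_lin_ext)
qed

lemma is_diagonal_approx_diagonal: "is_diagonal_approx n (diagonal n)"
  unfolding is_diagonal_approx_def
  by (simp add: in_T_diagonal diagonal_add diagonal_act tdiff_diagonal teps_diagonal)

lemma diagonal_xgen: "diagonal n 0 (xgen n) = tensor (xgen n) (xgen n)"
  by (simp add: diagonal_def xgen_eq lin_ext_unit_fun diag_gen_def)

lemma diagonal_ygen:
  assumes "1 \<le> i" "i \<le> n"
  shows "diagonal n 1 (ygen n i) = tensor (ygen n i) (act n (gen n i) (xgen n)) + tensor (xgen n) (ygen n i)"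
  unfolding diagonal_def ygen_eq xgen_eq lin_ext_unit_fun diag_gen_deg1
  using gen_in_carrier[OF assms] by (simp add: act_unit_fun)

lemma diagonal_wgen: "diagonal n 2 (wgen n) = diag_w n"
  by (simp add: diagonal_def wgen_eq lin_ext_unit_fun diag_gen_def tact_one[OF in_T_diag_w])

lemma proj_add: "proj r (F + G) = proj r F + proj r G"
  by (auto simp: proj_def)

lemma supp_on_tensor_fst: "in_P n k u \<Longrightarrow> supp_on (\<lambda>z. fst (fst z) = k) (tensor u v)"
  by (auto simp: supp_on_def tensor_def dest: in_P_nonzero)

lemma proj_supp_on:
  assumes "supp_on (\<lambda>z. fst (fst z) = k) F"
  shows "proj r F = (if k = r then F else 0)"
proof
  fix z
  have "F z \<noteq> 0 \<Longrightarrow> fst (fst z) = k" using assms unfolding supp_on_def by blast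
  then show "proj r F z = (if k = r then F else 0) z" by (auto simp: proj_def)
qed

lemma supp_on_diag11: "supp_on (\<lambda>z. fst (fst z) = 1) (diag11 n)"
proof -
  have "in_P n 1 (Y_sq n j + Y'_sq n j)" "in_P n 1 (Y_sq n j)" if "1 \<le> j" "j \<le> n" for j
    by (rule in_P_Y_sq_add[OF that], rule in_P_Y_sq(1)[OF that])
  then show ?thesis
    unfolding diag11_eq by (intro supp_on_sum supp_on_add supp_on_tensor_fst[of n]) auto
qed

lemma proj_diagonal_wgen:
  "proj r (diagonal n 2 (wgen n)) =
      (if r = 0 then tensor (xgen n) (wgen n) else 0) + (if r = 1 then diag11 n else 0)
      + (if r = 2 then tensor (wgen n) (xgen n) else 0)"
proof -
  have "supp_on (\<lambda>z. fst (fst z) = 0) (tensor (xgen n) (wgen n))"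
    by (rule supp_on_tensor_fst[OF in_P_xgen])
  moreover have "supp_on (\<lambda>z. fst (fst z) = 2) (tensor (wgen n) (xgen n))"
    by (rule supp_on_tensor_fst[OF in_P_wgen])
  ultimately show ?thesis
    by (simp add: diagonal_wgen diag_w_def proj_add proj_supp_on proj_supp_on[OF supp_on_diag11])
qed

theorem mainTheorem4:
  fixes n :: nat
  assumes "n \<ge> 2"
  shows "\<exists>\<Delta>. is_diagonal_approx n \<Delta>
     \<and> \<Delta> 0 (xgen n) = tensor (xgen n) (xgen n)
     \<and> (\<forall>i\<in>{1..n}. \<Delta> 1 (ygen n i) =
            tensor (ygen n i) (act n (gen n i) (xgen n)) + tensor (xgen n) (ygen n i))
     \<and> proj 0 (\<Delta> 2 (wgen n)) = tensor (xgen n) (wgen n)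
     \<and> proj 1 (\<Delta> 2 (wgen n)) =
         (\<Sum>i\<in>{1..n}.
            (\<Sum>j\<in>{1..<i}. tensor (act n (sqprod n j) (ygen n j + act n (gen n j) (ygen n j)))
                                  (act n (sqprod n i) (ygen n i)))
          + (\<Sum>j\<in>{1..<i}. tensor (act n (sqprod n j) (ygen n j + act n (gen n j) (ygen n j)))
                                  (act n (mult (surface_group n) (sqprod n i) (gen n i)) (ygen n i)))
          + tensor (act n (sqprod n i) (ygen n i))
                   (act n (mult (surface_group n) (sqprod n i) (gen n i)) (ygen n i)))"
proof (intro exI[of _ "diagonal n"] conjI ballI, fold diag11_def)
  show "is_diagonal_approx n (diagonal n)" by (rule is_diagonal_approx_diagonal)
  show "diagonal n 0 (xgen n) = tensor (xgen n) (xgen n)" by (rule diagonal_xgen)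
  show "diagonal n 1 (ygen n i) = tensor (ygen n i) (act n (gen n i) (xgen n)) + tensor (xgen n) (ygen n i)"
    if "i \<in> {1..n}" for i
    using that by (intro diagonal_ygen) auto
  show "proj 0 (diagonal n 2 (wgen n)) = tensor (xgen n) (wgen n)"
    using proj_diagonal_wgen[of 0 n] by simp
  show "proj 1 (diagonal n 2 (wgen n)) = diag11 n"
    using proj_diagonal_wgen[of 1 n] by simp
qed

end
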